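(* Let $G_1$ be a restricted frame graph, let $G_2$ be a chandelier with pivot $p$, and let $v\in V(G_1)$. Then the graph obtained from the disjoint union of $G_1$ and $G_2$ by identifying $v$ with $p$ is a restricted frame graph.
   Context: A chandelier is a graph obtained from a tree $T$ by adding a new vertex, the pivot, adjacent to every leaf of $T$. A frame is the boundary of an axis-parallel box $I\times J\subset\mathbb R^2$. A graph $G$ is a restricted frame graph if there is a family of frames $\{F_u : u\in V(G)\}$ with $uw\in E(G)$ iff $F_u\cap F_w\neq\emptyset$, satisfying: (1) corners of a frame do not coincide with any point of another frame; (2) the left side of any frame does not intersect any other frame; (3) if the right side of a frame intersects a second frame, this right side intersects both the top and the bottom side of the second frame; (4) if two frames have non-empty intersection, then no frame is entirely contained in the intersection of the two regions bounded by these two frames. *)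

theory Defs
  imports Main "HOL.Real"
begin

text \<open>A (finite simple) graph is given by a vertex set V and an adjacency
relation E, which is only consulted on V.\<close>

definition simple_graph :: "'a set \<Rightarrow> ('a \<Rightarrow> 'a \<Rightarrow> bool) \<Rightarrow> bool" where
  "simple_graph V E \<longleftrightarrow> finite V \<and>
     (\<forall>x\<in>V. \<forall>y\<in>V. E x y \<longrightarrow> E y x) \<and> (\<forall>x\<in>V. \<not> E x x)"

definition connected_graph :: "'a set \<Rightarrow> ('a \<Rightarrow> 'a \<Rightarrow> bool) \<Rightarrow> bool" where
  "connected_graph V E \<longleftrightarrow>
     (\<forall>x\<in>V. \<forall>y\<in>V. (\<lambda>a b. a \<in> V \<and> b \<in> V \<and> E a b)\<^sup>*\<^sup>* x y)"

definition is_cycle :: "'a set \<Rightarrow> ('a \<Rightarrow> 'a \<Rightarrow> bool) \<Rightarrow> 'a list \<Rightarrow> bool" where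
  "is_cycle V E cs \<longleftrightarrow> length cs \<ge> 3 \<and> distinct cs \<and> set cs \<subseteq> V \<and>
     (\<forall>i. Suc i < length cs \<longrightarrow> E (cs ! i) (cs ! Suc i)) \<and>
     E (last cs) (hd cs)"

definition is_tree :: "'a set \<Rightarrow> ('a \<Rightarrow> 'a \<Rightarrow> bool) \<Rightarrow> bool" where
  "is_tree V E \<longleftrightarrow> simple_graph V E \<and> V \<noteq> {} \<and> connected_graph V E \<and>
     \<not> (\<exists>cs. is_cycle V E cs)"

definition degree :: "'a set \<Rightarrow> ('a \<Rightarrow> 'a \<Rightarrow> bool) \<Rightarrow> 'a \<Rightarrow> nat" where
  "degree V E x = card {y\<in>V. E x y}"

definition is_leaf :: "'a set \<Rightarrow> ('a \<Rightarrow> 'a \<Rightarrow> bool) \<Rightarrow> 'a \<Rightarrow> bool" where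
  "is_leaf V E x \<longleftrightarrow> x \<in> V \<and> degree V E x = 1"

definition chandelier :: "'a set \<Rightarrow> ('a \<Rightarrow> 'a \<Rightarrow> bool) \<Rightarrow> 'a \<Rightarrow> bool" where
  "chandelier V E p \<longleftrightarrow> simple_graph V E \<and> p \<in> V \<and>
     is_tree (V - {p}) E \<and>
     (\<forall>x\<in>V - {p}. E p x \<longleftrightarrow> is_leaf (V - {p}) E x)"

text \<open>Disjoint union of (V1,E1) and (V2,E2) with v \<in> V1 identified with p \<in> V2.
The identified vertex is represented by Inl v.\<close>
definition glue_V :: "'a set \<Rightarrow> 'b set \<Rightarrow> 'b \<Rightarrow> ('a + 'b) set" where
  "glue_V V1 V2 p = Inl ` V1 \<union> Inr ` (V2 - {p})"

fun glue_E :: "('a \<Rightarrow> 'a \<Rightarrow> bool) \<Rightarrow> ('b \<Rightarrow> 'b \<Rightarrow> bool) \<Rightarrow> 'a \<Rightarrow> 'b \<Rightarrow>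
    ('a + 'b) \<Rightarrow> ('a + 'b) \<Rightarrow> bool" where
  "glue_E E1 E2 v p (Inl x) (Inl y) = E1 x y"
| "glue_E E1 E2 v p (Inr x) (Inr y) = E2 x y"
| "glue_E E1 E2 v p (Inl x) (Inr y) = (x = v \<and> E2 p y)"
| "glue_E E1 E2 v p (Inr x) (Inl y) = (y = v \<and> E2 x p)"

text \<open>A frame is the boundary of an axis-parallel box [a,b] \<times> [c,d] with a < b, c < d,
represented by the tuple (a, b, c, d).\<close>
type_synonym frame = "real \<times> real \<times> real \<times> real"

definition valid_frame :: "frame \<Rightarrow> bool" where
  "valid_frame F \<longleftrightarrow> (case F of (a, b, c, d) \<Rightarrow> a < b \<and> c < d)"

definition region :: "frame \<Rightarrow> (real \<times> real) set" where
  "region F = (case F of (a, b, c, d) \<Rightarrow> {a..b} \<times> {c..d})"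

definition left_side :: "frame \<Rightarrow> (real \<times> real) set" where
  "left_side F = (case F of (a, b, c, d) \<Rightarrow> {a} \<times> {c..d})"

definition right_side :: "frame \<Rightarrow> (real \<times> real) set" where
  "right_side F = (case F of (a, b, c, d) \<Rightarrow> {b} \<times> {c..d})"

definition bottom_side :: "frame \<Rightarrow> (real \<times> real) set" where
  "bottom_side F = (case F of (a, b, c, d) \<Rightarrow> {a..b} \<times> {c})"

definition top_side :: "frame \<Rightarrow> (real \<times> real) set" where
  "top_side F = (case F of (a, b, c, d) \<Rightarrow> {a..b} \<times> {d})"

definition frame_pts :: "frame \<Rightarrow> (real \<times> real) set" where
  "frame_pts F = left_side F \<union> right_side F \<union> bottom_side F \<union> top_side F"

definition corners :: "frame \<Rightarrow> (real \<times> real) set" where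
  "corners F = (case F of (a, b, c, d) \<Rightarrow> {(a, c), (a, d), (b, c), (b, d)})"

definition restricted_frame_rep ::
    "'a set \<Rightarrow> ('a \<Rightarrow> 'a \<Rightarrow> bool) \<Rightarrow> ('a \<Rightarrow> frame) \<Rightarrow> bool" where
  "restricted_frame_rep V E F \<longleftrightarrow>
     (\<forall>u\<in>V. valid_frame (F u)) \<and>
     (\<forall>u\<in>V. \<forall>w\<in>V. u \<noteq> w \<longrightarrow> (E u w \<longleftrightarrow> frame_pts (F u) \<inter> frame_pts (F w) \<noteq> {})) \<and>
     \<comment> \<open>(1) corners of a frame avoid every other frame\<close>
     (\<forall>u\<in>V. \<forall>w\<in>V. u \<noteq> w \<longrightarrow> corners (F u) \<inter> frame_pts (F w) = {}) \<and>
     \<comment> \<open>(2) the left side of a frame avoids every other frame\<close>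
     (\<forall>u\<in>V. \<forall>w\<in>V. u \<noteq> w \<longrightarrow> left_side (F u) \<inter> frame_pts (F w) = {}) \<and>
     \<comment> \<open>(3) a right side meeting another frame meets its top and bottom sides\<close>
     (\<forall>u\<in>V. \<forall>w\<in>V. u \<noteq> w \<longrightarrow> right_side (F u) \<inter> frame_pts (F w) \<noteq> {} \<longrightarrow>
        right_side (F u) \<inter> top_side (F w) \<noteq> {} \<and>
        right_side (F u) \<inter> bottom_side (F w) \<noteq> {}) \<and>
     \<comment> \<open>(4) no frame lies inside the intersection of the regions of two intersecting frames\<close>
     (\<forall>u\<in>V. \<forall>w\<in>V. \<forall>z\<in>V. u \<noteq> w \<longrightarrow> frame_pts (F u) \<inter> frame_pts (F w) \<noteq> {} \<longrightarrow>
        \<not> frame_pts (F z) \<subseteq> region (F u) \<inter> region (F w))"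

definition restricted_frame_graph :: "'a set \<Rightarrow> ('a \<Rightarrow> 'a \<Rightarrow> bool) \<Rightarrow> bool" where
  "restricted_frame_graph V E \<longleftrightarrow> simple_graph V E \<and> (\<exists>F. restricted_frame_rep V E F)"

end

theory Submission
  imports Defs
begin

text \<open>Take a restricted frame representation of \<open>G\<^sub>1\<close> and the upper right corner of the
  frame of \<open>v\<close>. Every other coordinate of the representation keeps a positive distance from
  that corner, so a small square at the corner meets no frame except that of \<open>v\<close>. The tree
  \<open>T = G\<^sub>2 - p\<close> is laid out by nested intervals, children inside their parent, and every vertex
  gets a frame in the square whose height is its interval and which moves to the right with its
  depth, so that exactly the frames of adjacent vertices cross. Finally the frames of the leaves
  of \<open>T\<close> are stretched across the right side of the frame of \<open>v\<close>; this realises the edges of the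
  pivot, and all conditions of a restricted representation only have to be checked near the
  corner.\<close>

section \<open>Frame geometry\<close>

lemma mem_frame_pts: "(x,y) \<in> frame_pts (a,b,c,d) \<longleftrightarrow>
  ((x = a \<or> x = b) \<and> c \<le> y \<and> y \<le> d) \<or> ((y = c \<or> y = d) \<and> a \<le> x \<and> x \<le> b)"
  by (auto simp: frame_pts_def left_side_def right_side_def top_side_def bottom_side_def)

lemma mem_region: "(x,y) \<in> region (a,b,c,d) \<longleftrightarrow> a \<le> x \<and> x \<le> b \<and> c \<le> y \<and> y \<le> d"
  by (auto simp: region_def)

lemma mem_left_side: "(x,y) \<in> left_side (a,b,c,d) \<longleftrightarrow> x = a \<and> c \<le> y \<and> y \<le> d"
  by (auto simp: left_side_def)

lemma mem_right_side: "(x,y) \<in> right_side (a,b,c,d) \<longleftrightarrow> x = b \<and> c \<le> y \<and> y \<le> d"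
  by (auto simp: right_side_def)

lemma mem_top_side: "(x,y) \<in> top_side (a,b,c,d) \<longleftrightarrow> y = d \<and> a \<le> x \<and> x \<le> b"
  by (auto simp: top_side_def)

lemma mem_bottom_side: "(x,y) \<in> bottom_side (a,b,c,d) \<longleftrightarrow> y = c \<and> a \<le> x \<and> x \<le> b"
  by (auto simp: bottom_side_def)

lemma mem_corners: "(x,y) \<in> corners (a,b,c,d) \<longleftrightarrow> (x = a \<or> x = b) \<and> (y = c \<or> y = d)"
  by (auto simp: corners_def)

lemmas frame_mem_simps = mem_frame_pts mem_region mem_left_side mem_right_side mem_top_side
  mem_bottom_side mem_corners

text \<open>Conditions (1)--(3) of a restricted frame representation for an ordered pair of frames.\<close>
definition frames_compatible :: "frame \<Rightarrow> frame \<Rightarrow> bool" where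
  "frames_compatible F G \<longleftrightarrow> corners F \<inter> frame_pts G = {} \<and> left_side F \<inter> frame_pts G = {} \<and>
     (right_side F \<inter> frame_pts G \<noteq> {} \<longrightarrow>
        right_side F \<inter> top_side G \<noteq> {} \<and> right_side F \<inter> bottom_side G \<noteq> {})"

definition crosses :: "frame \<Rightarrow> frame \<Rightarrow> bool" where
  "crosses F G \<longleftrightarrow> (case F of (a,b,c,d) \<Rightarrow> case G of (a',b',c',d') \<Rightarrow>
     a < a' \<and> a' < b \<and> b < b' \<and> c < c' \<and> c' < d' \<and> d' < d)"

definition encloses :: "frame \<Rightarrow> frame \<Rightarrow> bool" where
  "encloses F G \<longleftrightarrow> (case F of (a,b,c,d) \<Rightarrow> case G of (a',b',c',d') \<Rightarrow>
     a < a' \<and> a' < b' \<and> b' < b \<and> c < c' \<and> c' < d' \<and> d' < d)"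

definition separated :: "frame \<Rightarrow> frame \<Rightarrow> bool" where
  "separated F G \<longleftrightarrow> valid_frame F \<and> valid_frame G \<and> region F \<inter> region G = {}"

lemma frame_pts_subset_region: "valid_frame F \<Longrightarrow> frame_pts F \<subseteq> region F"
  by (cases F) (auto simp: frame_mem_simps valid_frame_def)

lemma lower_left_corner_in_frame_pts:
  "valid_frame (a, b, c, d) \<Longrightarrow> (a, c) \<in> frame_pts (a, b, c, d)"
  by (simp add: frame_mem_simps valid_frame_def)

lemma frames_compatible_if_disjoint:
  assumes "valid_frame F" "frame_pts F \<inter> frame_pts G = {}"
  shows "frames_compatible F G"
proof -
  have "corners F \<subseteq> frame_pts F" "left_side F \<subseteq> frame_pts F" "right_side F \<subseteq> frame_pts F"
    using assms(1) by (cases F; auto simp: frame_mem_simps valid_frame_def)+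
  then show ?thesis using assms(2) unfolding frames_compatible_def by blast
qed

lemma crossesD:
  assumes "crosses F G"
  shows "frame_pts F \<inter> frame_pts G \<noteq> {}" "frames_compatible F G" "frames_compatible G F"
proof -
  obtain a b c d a' b' c' d' where F: "F = (a,b,c,d)" and G: "G = (a',b',c',d')"
    by (cases F, cases G) auto
  have h: "a < a'" "a' < b" "b < b'" "c < c'" "c' < d'" "d' < d"
    using assms by (auto simp: crosses_def F G)
  have "(b, c') \<in> frame_pts F \<inter> frame_pts G" using h by (auto simp: F G frame_mem_simps)
  then show "frame_pts F \<inter> frame_pts G \<noteq> {}" by blast
  have "(b, d') \<in> right_side F \<inter> top_side G" "(b, c') \<in> right_side F \<inter> bottom_side G"
    using h by (auto simp: F G frame_mem_simps)
  moreover have "corners F \<inter> frame_pts G = {}" "left_side F \<inter> frame_pts G = {}"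
    using h by (auto simp: F G frame_mem_simps)
  ultimately show "frames_compatible F G" unfolding frames_compatible_def by blast
  show "frames_compatible G F" using h
    unfolding frames_compatible_def by (auto simp: F G frame_mem_simps)
qed

lemma enclosesD:
  assumes "encloses F G"
  shows "frame_pts F \<inter> frame_pts G = {}" "frames_compatible F G" "frames_compatible G F"
proof -
  obtain a b c d a' b' c' d' where F: "F = (a,b,c,d)" and G: "G = (a',b',c',d')"
    by (cases F, cases G) auto
  have h: "a < a'" "a' < b'" "b' < b" "c < c'" "c' < d'" "d' < d"
    using assms by (auto simp: encloses_def F G)
  show disj: "frame_pts F \<inter> frame_pts G = {}" using h by (auto simp: F G frame_mem_simps)
  have "valid_frame F" "valid_frame G" using h by (auto simp: F G valid_frame_def)
  then show "frames_compatible F G" "frames_compatible G F"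
    using frames_compatible_if_disjoint disj by (auto simp: Int_commute)
qed

lemma separatedD:
  assumes "separated F G"
  shows "frame_pts F \<inter> frame_pts G = {}" "frames_compatible F G" "frames_compatible G F"
proof -
  show disj: "frame_pts F \<inter> frame_pts G = {}"
    using assms frame_pts_subset_region[of F] frame_pts_subset_region[of G]
    unfolding separated_def by blast
  show "frames_compatible F G" "frames_compatible G F"
    using frames_compatible_if_disjoint disj assms by (auto simp: Int_commute separated_def)
qed

lemma separatedI:
  assumes "valid_frame (a, b, c, d)" "valid_frame (a', b', c', d')"
    and "b < a' \<or> b' < a \<or> d < c' \<or> d' < c"
  shows "separated (a, b, c, d) (a', b', c', d')"
  using assms unfolding separated_def by (auto simp: frame_mem_simps)

lemma restricted_frame_repI:
  assumes "\<And>u. u \<in> V \<Longrightarrow> valid_frame (F u)"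
    and "\<And>u w. u \<in> V \<Longrightarrow> w \<in> V \<Longrightarrow> u \<noteq> w \<Longrightarrow>
          E u w \<longleftrightarrow> frame_pts (F u) \<inter> frame_pts (F w) \<noteq> {}"
    and "\<And>u w. u \<in> V \<Longrightarrow> w \<in> V \<Longrightarrow> u \<noteq> w \<Longrightarrow> frames_compatible (F u) (F w)"
    and "\<And>u w z. u \<in> V \<Longrightarrow> w \<in> V \<Longrightarrow> z \<in> V \<Longrightarrow> u \<noteq> w \<Longrightarrow>
          frame_pts (F u) \<inter> frame_pts (F w) \<noteq> {} \<Longrightarrow>
          \<not> frame_pts (F z) \<subseteq> region (F u) \<inter> region (F w)"
  shows "restricted_frame_rep V E F"
proof -
  note compatible = assms(3)[unfolded frames_compatible_def]
  show ?thesis unfolding restricted_frame_rep_def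
  proof (intro conjI)
    show "\<forall>u\<in>V. \<forall>w\<in>V. u \<noteq> w \<longrightarrow> corners (F u) \<inter> frame_pts (F w) = {}"
      using compatible by blast
    show "\<forall>u\<in>V. \<forall>w\<in>V. u \<noteq> w \<longrightarrow> left_side (F u) \<inter> frame_pts (F w) = {}"
      using compatible by blast
    show "\<forall>u\<in>V. \<forall>w\<in>V. u \<noteq> w \<longrightarrow> right_side (F u) \<inter> frame_pts (F w) \<noteq> {} \<longrightarrow>
        right_side (F u) \<inter> top_side (F w) \<noteq> {} \<and> right_side (F u) \<inter> bottom_side (F w) \<noteq> {}"
      using compatible by blast
  qed (use assms(1,2,4) in blast)+
qed

lemma
  assumes "restricted_frame_rep V E F" and "u \<in> V"
  shows restricted_frame_rep_valid: "valid_frame (F u)"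
    and restricted_frame_rep_adj_iff:
      "w \<in> V \<Longrightarrow> u \<noteq> w \<Longrightarrow> E u w \<longleftrightarrow> frame_pts (F u) \<inter> frame_pts (F w) \<noteq> {}"
    and restricted_frame_rep_corners:
      "w \<in> V \<Longrightarrow> u \<noteq> w \<Longrightarrow> corners (F u) \<inter> frame_pts (F w) = {}"
    and restricted_frame_rep_left_side:
      "w \<in> V \<Longrightarrow> u \<noteq> w \<Longrightarrow> left_side (F u) \<inter> frame_pts (F w) = {}"
    and restricted_frame_rep_right_side:
      "w \<in> V \<Longrightarrow> u \<noteq> w \<Longrightarrow> right_side (F u) \<inter> frame_pts (F w) \<noteq> {} \<Longrightarrow>
        right_side (F u) \<inter> top_side (F w) \<noteq> {} \<and> right_side (F u) \<inter> bottom_side (F w) \<noteq> {}"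
    and restricted_frame_rep_overlap:
      "w \<in> V \<Longrightarrow> z \<in> V \<Longrightarrow> u \<noteq> w \<Longrightarrow> frame_pts (F u) \<inter> frame_pts (F w) \<noteq> {} \<Longrightarrow>
        \<not> frame_pts (F z) \<subseteq> region (F u) \<inter> region (F w)"
proof -
  note rep = assms(1)[unfolded restricted_frame_rep_def]
  show "valid_frame (F u)" using rep[THEN conjunct1] assms(2) by blast
  assume "w \<in> V" "u \<noteq> w"
  with rep[THEN conjunct2, THEN conjunct1] assms(2)
  show "E u w \<longleftrightarrow> frame_pts (F u) \<inter> frame_pts (F w) \<noteq> {}" by blast
  from \<open>w \<in> V\<close> \<open>u \<noteq> w\<close> rep[THEN conjunct2, THEN conjunct2, THEN conjunct1] assms(2)
  show "corners (F u) \<inter> frame_pts (F w) = {}" by blast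
  from \<open>w \<in> V\<close> \<open>u \<noteq> w\<close> rep[THEN conjunct2, THEN conjunct2, THEN conjunct2, THEN conjunct1] assms(2)
  show "left_side (F u) \<inter> frame_pts (F w) = {}" by blast
next
  assume "w \<in> V" "u \<noteq> w" "right_side (F u) \<inter> frame_pts (F w) \<noteq> {}"
  with assms(1)[unfolded restricted_frame_rep_def, THEN conjunct2, THEN conjunct2, THEN conjunct2,
      THEN conjunct2, THEN conjunct1] assms(2)
  show "right_side (F u) \<inter> top_side (F w) \<noteq> {} \<and> right_side (F u) \<inter> bottom_side (F w) \<noteq> {}"
    by blast
next
  assume "w \<in> V" "z \<in> V" "u \<noteq> w" "frame_pts (F u) \<inter> frame_pts (F w) \<noteq> {}"
  with assms(1)[unfolded restricted_frame_rep_def, THEN conjunct2, THEN conjunct2, THEN conjunct2,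
      THEN conjunct2, THEN conjunct2] assms(2)
  show "\<not> frame_pts (F z) \<subseteq> region (F u) \<inter> region (F w)"
    by blast
qed

lemma restricted_frame_rep_compatible:
  assumes "restricted_frame_rep V E F" "u \<in> V" "w \<in> V" "u \<noteq> w"
  shows "frames_compatible (F u) (F w)"
  unfolding frames_compatible_def
  using restricted_frame_rep_corners[OF assms] restricted_frame_rep_left_side[OF assms]
    restricted_frame_rep_right_side[OF assms]
  by blast

lemma restricted_frame_rep_meet_right_side:
  assumes rep: "restricted_frame_rep V E F" and uw: "u \<in> V" "w \<in> V" "u \<noteq> w"
    and meet: "frame_pts (F u) \<inter> frame_pts (F w) \<noteq> {}"
  shows "right_side (F u) \<inter> frame_pts (F w) \<noteq> {} \<or> right_side (F w) \<inter> frame_pts (F u) \<noteq> {}"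
proof (rule ccontr)
  assume no_right: "\<not> ?thesis"
  obtain a b c d a' b' c' d' where Fu: "F u = (a, b, c, d)" and Fw: "F w = (a', b', c', d')"
    by (cases "F u", cases "F w") auto
  obtain x y where xy: "(x, y) \<in> frame_pts (F u)" "(x, y) \<in> frame_pts (F w)" using meet by auto
  have "(x, y) \<notin> left_side (F u)" "(x, y) \<notin> left_side (F w)"
    using xy restricted_frame_rep_left_side[OF rep] uw by blast+
  moreover have "(x, y) \<notin> right_side (F u)" "(x, y) \<notin> right_side (F w)" using xy no_right by blast+
  ultimately have h: "y = c \<or> y = d" "a \<le> x" "x \<le> b" "y = c' \<or> y = d'" "a' \<le> x" "x \<le> b'"
    using xy unfolding Fu Fw by (auto simp: frame_mem_simps)
  \<comment> \<open>the frames meet along collinear horizontal sides, so the larger left end is a corner of one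
    frame lying on the other\<close>
  show False
  proof (cases "a \<le> a'")
    case True
    have "(a', y) \<in> corners (F w) \<inter> frame_pts (F u)" using h True unfolding Fu Fw by (auto simp: frame_mem_simps)
    then show False using restricted_frame_rep_corners[OF rep uw(2,1)] uw(3) by blast
  next
    case False
    have "(a, y) \<in> corners (F u) \<inter> frame_pts (F w)" using h False unfolding Fu Fw by (auto simp: frame_mem_simps)
    then show False using restricted_frame_rep_corners[OF rep uw] by blast
  qed
qed

section \<open>Pendant vertices of trees\<close>

definition is_path :: "'b set \<Rightarrow> ('b \<Rightarrow> 'b \<Rightarrow> bool) \<Rightarrow> 'b list \<Rightarrow> bool" where
  "is_path V E xs \<longleftrightarrow> set xs \<subseteq> V \<and> distinct xs \<and> (\<forall>i. Suc i < length xs \<longrightarrow> E (xs!i) (xs!Suc i))"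

lemma is_path_snoc:
  assumes "is_path V E xs" "xs \<noteq> []" "w \<in> V" "w \<notin> set xs" "E (last xs) w"
  shows "is_path V E (xs @ [w])"
  unfolding is_path_def
proof (intro conjI allI impI)
  show "set (xs @ [w]) \<subseteq> V" "distinct (xs @ [w])" using assms by (auto simp: is_path_def)
  fix i assume i: "Suc i < length (xs @ [w])"
  show "E ((xs @ [w]) ! i) ((xs @ [w]) ! Suc i)"
  proof (cases "Suc i < length xs")
    case True then show ?thesis using assms(1) by (simp add: is_path_def nth_append)
  next
    case False
    then have "i = length xs - 1" using i by simp
    then show ?thesis using assms(2,5) by (simp add: nth_append last_conv_nth)
  qed
qed

lemma last_of_path_in_acyclic_graph:
  assumes acyclic: "\<not> (\<exists>cs. is_cycle V E cs)" and irrefl: "\<not> E (last xs) (last xs)"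
    and path: "is_path V E xs" and len: "2 \<le> length xs"
    and w: "w \<in> set xs" "E (last xs) w"
  shows "w = xs ! (length xs - 2)"
proof (rule ccontr)
  assume w_ne: "w \<noteq> xs ! (length xs - 2)"
  obtain i where i: "i < length xs" "w = xs ! i" using w(1) by (metis in_set_conv_nth)
  have "last xs = xs ! (length xs - 1)" using len by (intro last_conv_nth) auto
  then have "i \<noteq> length xs - 1" using irrefl w(2) i by auto
  moreover have "i \<noteq> length xs - 2" using i w_ne by auto
  ultimately have i2: "i < length xs - 2" using i by linarith
  have "is_cycle V E (drop i xs)" unfolding is_cycle_def
  proof (intro conjI allI impI)
    show "3 \<le> length (drop i xs)" using i2 by simp
    show "distinct (drop i xs)" "set (drop i xs) \<subseteq> V"
      using path set_drop_subset[of i xs] by (auto simp: is_path_def)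
    fix j assume "Suc j < length (drop i xs)"
    then show "E (drop i xs ! j) (drop i xs ! Suc j)" using path by (simp add: is_path_def)
  next
    show "E (last (drop i xs)) (hd (drop i xs))" using w(2) i i2 by (simp add: hd_drop_conv_nth)
  qed
  then show False using acyclic by blast
qed

lemma longest_path_with_head:
  assumes "finite V" "is_path V E xs\<^sub>0" "xs\<^sub>0 \<noteq> []"
  obtains xs where "is_path V E xs" "xs \<noteq> []" "hd xs = hd xs\<^sub>0" "length xs\<^sub>0 \<le> length xs"
    "\<And>ys. is_path V E ys \<Longrightarrow> ys \<noteq> [] \<Longrightarrow> hd ys = hd xs\<^sub>0 \<Longrightarrow> length ys \<le> length xs"
proof -
  define P where "P k \<longleftrightarrow> (\<exists>xs. is_path V E xs \<and> xs \<noteq> [] \<and> hd xs = hd xs\<^sub>0 \<and> length xs = k)" for k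
  have P0: "P (length xs\<^sub>0)" using assms(2,3) unfolding P_def by blast
  moreover have "\<forall>k. P k \<longrightarrow> k \<le> card V"
    unfolding P_def is_path_def using assms(1) by (metis card_mono distinct_card)
  ultimately obtain n where "P n" and greatest: "\<And>k. P k \<Longrightarrow> k \<le> n"
    using Nat.ex_has_greatest_nat[of P "length xs\<^sub>0" "card V"] by blast
  then obtain xs where xs: "is_path V E xs" "xs \<noteq> []" "hd xs = hd xs\<^sub>0" "length xs = n"
    unfolding P_def by blast
  show ?thesis
  proof (rule that[OF xs(1-3)])
    show "length xs\<^sub>0 \<le> length xs" using greatest[OF P0] xs(4) by simp
    show "length ys \<le> length xs" if "is_path V E ys" "ys \<noteq> []" "hd ys = hd xs\<^sub>0" for ys
      using greatest[of "length ys"] that xs(4) unfolding P_def by blast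
  qed
qed

lemma tree_has_pendant_vertex:
  assumes tree: "is_tree V E" and r: "r \<in> V" and nontrivial: "V \<noteq> {r}"
  shows "\<exists>l\<in>V. l \<noteq> r \<and> (\<exists>q\<in>V. E l q \<and> (\<forall>y\<in>V. E l y \<longrightarrow> y = q))"
proof -
  have fin: "finite V" and sym: "\<And>x y. x \<in> V \<Longrightarrow> y \<in> V \<Longrightarrow> E x y \<Longrightarrow> E y x"
    and irrefl: "\<And>x. x \<in> V \<Longrightarrow> \<not> E x x" and acyclic: "\<not> (\<exists>cs. is_cycle V E cs)"
    using tree by (auto simp: is_tree_def simple_graph_def)
  obtain z where z: "z \<in> V" "z \<noteq> r" using nontrivial r by auto
  have "(\<lambda>a b. a \<in> V \<and> b \<in> V \<and> E a b)\<^sup>*\<^sup>* r z"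
    using tree r z by (auto simp: is_tree_def connected_graph_def)
  then obtain y where y: "y \<in> V" "E r y"
    by (cases rule: converse_rtranclpE) (use z in auto)
  have "is_path V E [r, y]"
    using y r irrefl by (auto simp: is_path_def less_Suc_eq)
  then obtain xs where xs: "is_path V E xs" "xs \<noteq> []" "hd xs = r" "length [r, y] \<le> length xs"
    and longest: "\<And>ys. is_path V E ys \<Longrightarrow> ys \<noteq> [] \<Longrightarrow> hd ys = r \<Longrightarrow> length ys \<le> length xs"
    by (rule longest_path_with_head[OF fin]) auto
  have n2: "2 \<le> length xs" using xs(4) by simp
  define n l q where "n = length xs" and "l = last xs" and "q = xs ! (n - 2)"
  have lq: "l \<in> V" "q \<in> V" "l = xs ! (n - 1)"
    using xs n2 nth_mem[of "n - 1" xs] nth_mem[of "n - 2" xs]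
    by (auto simp: n_def l_def q_def last_conv_nth is_path_def)
  have "l \<noteq> r"
    using xs n2 by (auto simp: n_def lq(3) hd_conv_nth nth_eq_iff_index_eq is_path_def)
  moreover have "E l q"
  proof -
    have "Suc (n - 2) < length xs" using n2 by (auto simp: n_def)
    then have "E (xs ! (n - 2)) (xs ! Suc (n - 2))" using xs(1) by (simp add: is_path_def)
    moreover have "Suc (n - 2) = n - 1" using n2 by (auto simp: n_def)
    ultimately have "E q l" by (simp add: q_def lq(3))
    then show ?thesis using sym lq by blast
  qed
  moreover have "y' = q" if "y' \<in> V" "E l y'" for y'
  proof -
    have "y' \<in> set xs"
    proof (rule ccontr)
      assume "y' \<notin> set xs"
      then have "is_path V E (xs @ [y'])" using is_path_snoc[OF xs(1,2) that(1)] that(2) by (simp add: l_def)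
      then show False using longest[of "xs @ [y']"] xs(3) by (simp add: xs(2))
    qed
    then show ?thesis
      using last_of_path_in_acyclic_graph[OF acyclic _ xs(1)] irrefl lq(1) n2 that(2)
      by (simp add: n_def l_def q_def)
  qed
  ultimately show ?thesis using lq by blast
qed

lemma reachable_avoiding_pendant:
  fixes V :: "'b set" and E :: "'b \<Rightarrow> 'b \<Rightarrow> bool" and l q :: 'b
  defines "R \<equiv> \<lambda>a b. a \<in> V \<and> b \<in> V \<and> E a b" and "R' \<equiv> \<lambda>a b. a \<in> V - {l} \<and> b \<in> V - {l} \<and> E a b"
  assumes sg: "simple_graph V E" and l: "l \<in> V" "\<forall>y\<in>V. E l y \<longrightarrow> y = q"
    and path: "R\<^sup>*\<^sup>* x y" and x: "x \<in> V - {l}"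
  shows "R'\<^sup>*\<^sup>* x (if y = l then q else y)"
  using path
proof (induction rule: rtranclp_induct)
  case base
  then show ?case using x by simp
next
  case (step y z)
  have yz: "y \<in> V" "z \<in> V" "E y z" using step.hyps(2) by (simp_all add: R_def)
  have sym: "E z y" and irrefl: "y \<noteq> z" using sg yz by (auto simp: simple_graph_def)
  show ?case
  proof (cases "y = l")
    case True
    then have "z = q" using yz l(2) by blast
    then show ?thesis using step.IH True irrefl by simp
  next
    case False
    show ?thesis
    proof (cases "z = l")
      case True
      then have "y = q" using sym yz l(2) by blast
      then show ?thesis using step.IH False True by simp
    next
      case z_ne: False
      have "R' y z" using yz False z_ne by (simp add: R'_def)
      then show ?thesis using step.IH False z_ne by (simp add: rtranclp.rtrancl_into_rtrancl)
    qed
  qed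
qed

lemma tree_remove_pendant:
  assumes tree: "is_tree V E" and l: "l \<in> V" "\<forall>y\<in>V. E l y \<longrightarrow> y = q" and nontrivial: "V \<noteq> {l}"
  shows "is_tree (V - {l}) E"
proof -
  have sg: "simple_graph V E" using tree by (simp add: is_tree_def)
  have "connected_graph (V - {l}) E" unfolding connected_graph_def
  proof (intro ballI)
    fix x y assume xy: "x \<in> V - {l}" "y \<in> V - {l}"
    then have reach: "(\<lambda>a b. a \<in> V \<and> b \<in> V \<and> E a b)\<^sup>*\<^sup>* x y"
      using tree by (auto simp: is_tree_def connected_graph_def)
    show "(\<lambda>a b. a \<in> V - {l} \<and> b \<in> V - {l} \<and> E a b)\<^sup>*\<^sup>* x y"
      using reachable_avoiding_pendant[OF sg l reach xy(1)] xy(2) by simp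
  qed
  moreover have "\<not> (\<exists>cs. is_cycle (V - {l}) E cs)"
    using tree by (auto simp: is_tree_def is_cycle_def)
  moreover have "simple_graph (V - {l}) E" using sg by (simp add: simple_graph_def)
  moreover have "V - {l} \<noteq> {}" using nontrivial l by auto
  ultimately show ?thesis by (simp add: is_tree_def)
qed

section \<open>Nested interval layouts of trees\<close>

definition interval_encloses :: "('b \<Rightarrow> real) \<Rightarrow> ('b \<Rightarrow> real) \<Rightarrow> 'b \<Rightarrow> 'b \<Rightarrow> bool" where
  "interval_encloses lo hi s t \<longleftrightarrow> lo s < lo t \<and> hi t < hi s"

definition deeper :: "'b set \<Rightarrow> ('b \<Rightarrow> 'b \<Rightarrow> bool) \<Rightarrow> ('b \<Rightarrow> nat) \<Rightarrow> 'b \<Rightarrow> 'b \<Rightarrow> bool" where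
  "deeper T E dep s t \<longleftrightarrow> (E s t \<and> dep t = Suc (dep s)) \<or>
     (\<not> E s t \<and> dep s + 2 \<le> dep t \<and> (\<exists>c\<in>T. E s c \<and> dep c = Suc (dep s)))"

definition layout_compatible :: "'b set \<Rightarrow> ('b \<Rightarrow> 'b \<Rightarrow> bool) \<Rightarrow> ('b \<Rightarrow> nat) \<Rightarrow>
    ('b \<Rightarrow> real) \<Rightarrow> ('b \<Rightarrow> real) \<Rightarrow> 'b \<Rightarrow> 'b \<Rightarrow> bool" where
  "layout_compatible T E dep lo hi s t \<longleftrightarrow> (\<not> E s t \<and> (hi s < lo t \<or> hi t < lo s)) \<or>
     (interval_encloses lo hi s t \<and> deeper T E dep s t) \<or>
     (interval_encloses lo hi t s \<and> deeper T E dep t s)"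

definition tree_layout :: "'b set \<Rightarrow> ('b \<Rightarrow> 'b \<Rightarrow> bool) \<Rightarrow> 'b \<Rightarrow> ('b \<Rightarrow> nat) \<Rightarrow>
    ('b \<Rightarrow> real) \<Rightarrow> ('b \<Rightarrow> real) \<Rightarrow> bool" where
  "tree_layout T E r dep lo hi \<longleftrightarrow> dep r = 0 \<and> (\<forall>t\<in>T. 0 < lo t \<and> lo t < hi t \<and> hi t < 1) \<and>
     (\<forall>t\<in>T. t \<noteq> r \<longrightarrow> (\<exists>s\<in>T. E t s \<and> dep t = Suc (dep s))) \<and>
     (\<forall>s\<in>T. \<forall>t\<in>T. s \<noteq> t \<longrightarrow> layout_compatible T E dep lo hi s t)"

lemma layout_compatible_sym:
  "(E s t \<longleftrightarrow> E t s) \<Longrightarrow> layout_compatible T E dep lo hi s t \<Longrightarrow> layout_compatible T E dep lo hi t s"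
  unfolding layout_compatible_def by blast

lemma deeper_mono:
  assumes "deeper T E dep s t" "T \<subseteq> T'" "s \<in> T" "t \<in> T" "\<forall>x\<in>T. dep' x = dep x"
  shows "deeper T' E dep' s t"
proof -
  have "dep' s = dep s" "dep' t = dep t" using assms(3-5) by auto
  moreover have "\<exists>c\<in>T'. E s c \<and> dep' c = Suc (dep s)" if "\<exists>c\<in>T. E s c \<and> dep c = Suc (dep s)"
    using that assms(2,5) by fastforce
  ultimately show ?thesis using assms(1) unfolding deeper_def by auto
qed

lemma layout_compatible_mono:
  assumes "layout_compatible T E dep lo hi s t" "T \<subseteq> T'" "s \<in> T" "t \<in> T"
    "\<forall>x\<in>T. dep' x = dep x \<and> lo' x = lo x \<and> hi' x = hi x"
  shows "layout_compatible T' E dep' lo' hi' s t"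
proof -
  have "dep' x = dep x" "lo' x = lo x" "hi' x = hi x" if "x \<in> {s, t}" for x
    using that assms(3-5) by auto
  then have eq: "interval_encloses lo' hi' s t = interval_encloses lo hi s t"
    "interval_encloses lo' hi' t s = interval_encloses lo hi t s"
    "(hi' s < lo' t) = (hi s < lo t)" "(hi' t < lo' s) = (hi t < lo s)"
    by (simp_all add: interval_encloses_def)
  have "deeper T E dep s t \<Longrightarrow> deeper T' E dep' s t" "deeper T E dep t s \<Longrightarrow> deeper T' E dep' t s"
    using deeper_mono[OF _ assms(2)] assms(3-5) by blast+
  then show ?thesis using assms(1) unfolding layout_compatible_def eq by blast
qed

lemma exists_gap_above:
  fixes x y :: real
  assumes "finite X" "x < y"
  shows "\<exists>\<delta>>0. 3 * \<delta> \<le> y - x \<and> (\<forall>z\<in>X. x < z \<longrightarrow> 3 * \<delta> \<le> z - x)"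
proof -
  define S where "S = insert (y - x) ((\<lambda>z. z - x) ` {z\<in>X. x < z})"
  have "finite S" "S \<noteq> {}" "\<forall>s\<in>S. 0 < s" using assms by (auto simp: S_def)
  then have "0 < Min S / 3" by simp
  moreover have "Min S \<le> s" if "s \<in> S" for s using \<open>finite S\<close> that by simp
  ultimately show ?thesis by (intro exI[of _ "Min S / 3"]) (auto simp: S_def)
qed

context
  fixes T :: "'b set" and E :: "'b \<Rightarrow> 'b \<Rightarrow> bool" and r l q :: 'b
    and dep :: "'b \<Rightarrow> nat" and lo hi :: "'b \<Rightarrow> real" and \<delta> :: real
  assumes layout: "tree_layout T E r dep lo hi" and r: "r \<in> T" and q: "q \<in> T" and l: "l \<notin> T"
    and leaf_adj: "\<And>t. t \<in> insert l T \<Longrightarrow> E l t \<longleftrightarrow> t = q"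
    and leaf_adj': "\<And>t. t \<in> insert l T \<Longrightarrow> E t l \<longleftrightarrow> t = q"
    and \<delta>: "0 < \<delta>" "3 * \<delta> \<le> hi q - lo q" "\<And>s. s \<in> T \<Longrightarrow> lo q < lo s \<Longrightarrow> 3 * \<delta> \<le> lo s - lo q"
begin

text \<open>The new leaf gets an interval at the bottom of its neighbour's interval, below every
  interval starting inside it.\<close>
abbreviation "dep_ext \<equiv> dep(l := Suc (dep q))"
abbreviation "lo_ext \<equiv> lo(l := lo q + \<delta>)"
abbreviation "hi_ext \<equiv> hi(l := lo q + 2 * \<delta>)"

lemma deeper_new_leaf:
  assumes t: "t \<in> T" "t \<noteq> q" and deeper: "deeper T E dep t q"
  shows "deeper (insert l T) E dep_ext t l"
proof -
  have ext: "dep_ext t = dep t" using t l by auto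
  have "dep t + 1 \<le> dep q" using deeper unfolding deeper_def by auto
  moreover have "\<exists>c\<in>insert l T. E t c \<and> dep_ext c = Suc (dep_ext t)"
  proof (cases "E t q \<and> dep q = Suc (dep t)")
    case True
    then show ?thesis using q l ext by (intro bexI[of _ q]) auto
  next
    case False
    then obtain c where "c \<in> T" "E t c" "dep c = Suc (dep t)"
      using deeper unfolding deeper_def by blast
    then show ?thesis using l ext by (intro bexI[of _ c]) auto
  qed
  moreover have "\<not> E t l" using leaf_adj' t by blast
  ultimately show ?thesis unfolding deeper_def using ext by auto
qed

lemma layout_compatible_with_new_leaf:
  assumes t: "t \<in> T"
  shows "layout_compatible (insert l T) E dep_ext lo_ext hi_ext t l"
proof (cases "t = q")
  case True
  have "interval_encloses lo_ext hi_ext q l" using q l \<delta> by (auto simp: interval_encloses_def)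
  moreover have "deeper (insert l T) E dep_ext q l" using leaf_adj' q l by (auto simp: deeper_def)
  ultimately show ?thesis using True unfolding layout_compatible_def by blast
next
  case t_ne_q: False
  have not_adj: "\<not> E t l" using leaf_adj' t t_ne_q by blast
  have ext: "lo_ext t = lo t" "hi_ext t = hi t" using t l by auto
  have "layout_compatible T E dep lo hi t q" using layout t q t_ne_q by (simp add: tree_layout_def)
  then consider (disjoint) "hi t < lo q \<or> hi q < lo t"
    | (above) "interval_encloses lo hi t q" "deeper T E dep t q"
    | (below) "interval_encloses lo hi q t"
    unfolding layout_compatible_def by blast
  then show ?thesis
  proof cases
    case disjoint
    have "lo q < hi q" using layout q by (simp add: tree_layout_def)
    then have "hi t < lo q \<or> lo q < lo t" using disjoint by linarith
    then have "hi_ext t < lo_ext l \<or> hi_ext l < lo_ext t" using ext \<delta>(1) \<delta>(3)[OF t] by auto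
    then show ?thesis using not_adj unfolding layout_compatible_def by blast
  next
    case above
    then have "interval_encloses lo_ext hi_ext t l" using ext \<delta> unfolding interval_encloses_def by simp
    then show ?thesis
      using deeper_new_leaf[OF t t_ne_q above(2)] unfolding layout_compatible_def by blast
  next
    case below
    then have "hi_ext l < lo_ext t" using ext \<delta>(1) \<delta>(3)[OF t] by (auto simp: interval_encloses_def)
    then show ?thesis using not_adj unfolding layout_compatible_def by blast
  qed
qed

lemma layout_compatible_add_leaf:
  assumes st: "s \<in> insert l T" "t \<in> insert l T" "s \<noteq> t"
  shows "layout_compatible (insert l T) E dep_ext lo_ext hi_ext s t"
proof (cases "t = l")
  case True
  then show ?thesis using st layout_compatible_with_new_leaf by simp
next
  case t_ne_l: False
  show ?thesis
  proof (cases "s = l")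
    case True
    have "E t s \<longleftrightarrow> E s t" using True leaf_adj leaf_adj' st by simp
    moreover have "layout_compatible (insert l T) E dep_ext lo_ext hi_ext t s"
      using layout_compatible_with_new_leaf True st(2) t_ne_l by simp
    ultimately show ?thesis by (rule layout_compatible_sym)
  next
    case False
    then have "s \<in> T" "t \<in> T" using st t_ne_l by auto
    moreover have "\<forall>x\<in>T. dep_ext x = dep x \<and> lo_ext x = lo x \<and> hi_ext x = hi x" using l by auto
    moreover have "layout_compatible T E dep lo hi s t"
      using layout st(3) \<open>s \<in> T\<close> \<open>t \<in> T\<close> by (simp add: tree_layout_def)
    ultimately show ?thesis using layout_compatible_mono[of T E dep lo hi s t "insert l T"] by blast
  qed
qed

lemma tree_layout_add_leaf: "tree_layout (insert l T) E r dep_ext lo_ext hi_ext"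
proof -
  have "0 < lo_ext t \<and> lo_ext t < hi_ext t \<and> hi_ext t < 1" if t: "t \<in> insert l T" for t
  proof -
    have "0 < lo q" "hi q < 1" using layout q by (auto simp: tree_layout_def)
    then show ?thesis using t layout \<delta>(1,2) by (cases "t = l") (auto simp: tree_layout_def)
  qed
  moreover have "\<exists>s\<in>insert l T. E t s \<and> dep_ext t = Suc (dep_ext s)"
    if t: "t \<in> insert l T" "t \<noteq> r" for t
  proof (cases "t = l")
    case True
    then show ?thesis using leaf_adj q l by (intro bexI[of _ q]) auto
  next
    case False
    then obtain s where "s \<in> T" "E t s" "dep t = Suc (dep s)"
      using layout t by (auto simp: tree_layout_def)
    then show ?thesis using False l by (intro bexI[of _ s]) auto
  qed
  moreover have "dep_ext r = 0" using layout r l by (auto simp: tree_layout_def)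
  ultimately show ?thesis unfolding tree_layout_def using layout_compatible_add_leaf by blast
qed

end

lemma tree_layout_insert_leaf:
  assumes layout: "tree_layout T E r dep lo hi" and "finite T" "r \<in> T" "q \<in> T" "l \<notin> T"
    and "\<And>t. t \<in> insert l T \<Longrightarrow> E l t \<longleftrightarrow> t = q" "\<And>t. t \<in> insert l T \<Longrightarrow> E t l \<longleftrightarrow> t = q"
  shows "\<exists>dep lo hi. tree_layout (insert l T) E r dep lo hi"
proof -
  have "lo q < hi q" using layout \<open>q \<in> T\<close> by (simp add: tree_layout_def)
  then have "\<exists>\<delta>>0. 3 * \<delta> \<le> hi q - lo q \<and> (\<forall>s\<in>T. lo q < lo s \<longrightarrow> 3 * \<delta> \<le> lo s - lo q)"
    using exists_gap_above[of "lo ` T"] \<open>finite T\<close> by simp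
  then obtain \<delta> where "0 < \<delta>" "3 * \<delta> \<le> hi q - lo q"
    "\<forall>s\<in>T. lo q < lo s \<longrightarrow> 3 * \<delta> \<le> lo s - lo q"
    by blast
  then have "tree_layout (insert l T) E r
      (dep(l := Suc (dep q))) (lo(l := lo q + \<delta>)) (hi(l := lo q + 2 * \<delta>))"
    using assms by (intro tree_layout_add_leaf) auto
  then show ?thesis by blast
qed

lemma tree_layout_exists:
  assumes "is_tree T E" "r \<in> T"
  shows "\<exists>dep lo hi. tree_layout T E r dep lo hi"
  using assms
proof (induction "card T" arbitrary: T rule: less_induct)
  case less
  show ?case
  proof (cases "T = {r}")
    case True
    then have "tree_layout T E r (\<lambda>_. 0) (\<lambda>_. 1/3) (\<lambda>_. 2/3)" by (simp add: tree_layout_def)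
    then show ?thesis by blast
  next
    case False
    have fin: "finite T" and sym: "\<And>x y. x \<in> T \<Longrightarrow> y \<in> T \<Longrightarrow> E x y \<Longrightarrow> E y x"
      and irrefl: "\<And>x. x \<in> T \<Longrightarrow> \<not> E x x"
      using less.prems by (auto simp: is_tree_def simple_graph_def)
    obtain l q where l: "l \<in> T" "l \<noteq> r" and q: "q \<in> T" "E l q"
      and pendant: "\<forall>y\<in>T. E l y \<longrightarrow> y = q"
      using tree_has_pendant_vertex[OF less.prems False] by blast
    have "T \<noteq> {l}" using less.prems(2) l by blast
    then have "is_tree (T - {l}) E" using tree_remove_pendant[OF less.prems(1) l(1) pendant] by blast
    moreover have "card (T - {l}) < card T" using fin l(1) by (rule card_Diff1_less)
    moreover have r': "r \<in> T - {l}" and q': "q \<in> T - {l}"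
      using less.prems(2) l q irrefl by auto
    ultimately obtain dep lo hi where layout: "tree_layout (T - {l}) E r dep lo hi"
      using less.hyps by blast
    have T_eq: "insert l (T - {l}) = T" using l(1) by blast
    have "E l t \<longleftrightarrow> t = q" "E t l \<longleftrightarrow> t = q" if "t \<in> T" for t
      using that pendant q sym[of l t] sym[of t l] l(1) by blast+
    then show ?thesis
      using tree_layout_insert_leaf[OF layout _ r' q', of l] fin unfolding T_eq by blast
  qed
qed

section \<open>Frames for a laid-out tree\<close>

locale rooted_tree_layout =
  fixes T :: "'b set" and E :: "'b \<Rightarrow> 'b \<Rightarrow> bool" and r :: 'b
    and dep :: "'b \<Rightarrow> nat" and lo hi :: "'b \<Rightarrow> real"
  assumes tree: "is_tree T E" and root: "r \<in> T" and layout: "tree_layout T E r dep lo hi"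
    and leaf_root_degrees_le_one: "is_leaf T E r \<Longrightarrow> \<forall>t\<in>T. degree T E t \<le> 1"
      \<comment> \<open>the root is not a leaf unless \<open>T\<close> has at most two vertices\<close>
begin

lemma finite_T: "finite T"
  using tree by (simp add: is_tree_def simple_graph_def)

lemma adj_sym: "x \<in> T \<Longrightarrow> y \<in> T \<Longrightarrow> E x y \<Longrightarrow> E y x"
  using tree by (simp add: is_tree_def simple_graph_def)

lemma dep_root: "dep r = 0"
  using layout by (simp add: tree_layout_def)

lemma interval_bounds: "t \<in> T \<Longrightarrow> 0 < lo t \<and> lo t < hi t \<and> hi t < 1"
  using layout by (simp add: tree_layout_def)

lemma parent_exists: "t \<in> T \<Longrightarrow> t \<noteq> r \<Longrightarrow> \<exists>s\<in>T. E t s \<and> dep t = Suc (dep s)"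
  using layout by (simp add: tree_layout_def)

lemma compatible:
  "s \<in> T \<Longrightarrow> t \<in> T \<Longrightarrow> s \<noteq> t \<Longrightarrow>
    (\<not> E s t \<and> (hi s < lo t \<or> hi t < lo s)) \<or> (interval_encloses lo hi s t \<and> deeper T E dep s t) \<or>
    (interval_encloses lo hi t s \<and> deeper T E dep t s)"
  using layout unfolding tree_layout_def layout_compatible_def by blast

definition degrees_le_one :: bool where
  "degrees_le_one \<longleftrightarrow> (\<forall>t\<in>T. degree T E t \<le> 1)"

lemma degree_ge_2:
  assumes "t \<in> T" "s \<in> T" "c \<in> T" "E t s" "E t c" "s \<noteq> c"
  shows "2 \<le> degree T E t"
proof -
  have "{s, c} \<subseteq> {y\<in>T. E t y}" using assms by auto
  then have "card {s, c} \<le> degree T E t" unfolding degree_def using finite_T by (intro card_mono) auto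
  then show ?thesis using assms(6) by simp
qed

lemma leaf_with_child:
  assumes t: "t \<in> T" "is_leaf T E t" and c: "c \<in> T" "E t c" "dep c = Suc (dep t)"
  shows "t = r" and degrees_le_one
proof -
  show "t = r"
  proof (rule ccontr)
    assume "t \<noteq> r"
    then obtain s where "s \<in> T" "E t s" "dep t = Suc (dep s)" using parent_exists t(1) by blast
    then have "2 \<le> degree T E t" using degree_ge_2[OF t(1) _ c(1) _ c(2)] c(3) by force
    then show False using t(2) unfolding is_leaf_def by simp
  qed
  then show degrees_le_one using leaf_root_degrees_le_one t(2) unfolding degrees_le_one_def by simp
qed

lemma dep_le_1_if_degrees_le_one:
  assumes degrees_le_one and t: "t \<in> T"
  shows "dep t \<le> 1"
proof (rule ccontr)
  assume "\<not> dep t \<le> 1"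
  then have "t \<noteq> r" using dep_root by auto
  then obtain s where s: "s \<in> T" "E t s" "dep t = Suc (dep s)" using parent_exists t by blast
  then have "s \<noteq> r" using \<open>\<not> dep t \<le> 1\<close> dep_root by auto
  then obtain s' where s': "s' \<in> T" "E s s'" "dep s = Suc (dep s')" using parent_exists s(1) by blast
  have "2 \<le> degree T E s" using degree_ge_2[OF s(1) t s'(1) adj_sym[OF t s(1,2)] s'(2)] s(3) s'(3) by force
  then show False using assms(1) s(1) unfolding degrees_le_one_def by fastforce
qed

lemma leaf_if_degrees_le_one:
  assumes degrees_le_one and t: "t \<in> T" "s \<in> T" "E t s"
  shows "is_leaf T E t"
proof -
  have "{y\<in>T. E t y} \<noteq> {}" "finite {y\<in>T. E t y}" using t finite_T by auto
  then have "1 \<le> degree T E t" unfolding degree_def by (simp add: Suc_leI card_gt_0_iff)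
  then show ?thesis using assms(1) t(1) unfolding degrees_le_one_def is_leaf_def by fastforce
qed

lemma child_interval_nested:
  assumes st: "s \<in> T" "t \<in> T" "E s t" "dep t = Suc (dep s)"
  shows "interval_encloses lo hi s t"
proof -
  have "\<not> deeper T E dep t s" unfolding deeper_def using st adj_sym by auto
  then show ?thesis using compatible[OF st(1,2)] st by fastforce
qed

lemma adjacent_depths:
  assumes st: "s \<in> T" "t \<in> T" "s \<noteq> t" "E s t"
  shows "dep t = Suc (dep s) \<or> dep s = Suc (dep t)"
  using compatible[OF st(1-3)] st(4) adj_sym[OF st(1,2,4)] unfolding deeper_def by blast

lemma deeper_nonadjacent:
  assumes s: "s \<in> T" and t: "t \<in> T" and deeper: "deeper T E dep s t" and not_adj: "\<not> E s t"
  shows "\<not> is_leaf T E s" "dep s + 2 \<le> dep t"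
proof -
  from deeper not_adj obtain c where c: "c \<in> T" "E s c" "dep c = Suc (dep s)"
    and gap: "dep s + 2 \<le> dep t"
    unfolding deeper_def by blast
  show "dep s + 2 \<le> dep t" by (rule gap)
  show "\<not> is_leaf T E s"
    using leaf_with_child(2)[OF s _ c] dep_le_1_if_degrees_le_one[OF _ t] gap by fastforce
qed

end

text \<open>The frames of the tree, placed in the square of side \<open>\<epsilon>\<close> below and to the left of the
  point \<open>(x0, y0)\<close>. Each level of depth shifts a frame to the right by \<open>\<eta>\<close>; an inner frame has
  width \<open>3/2 \<eta>\<close>, so it overlaps the frames one level deeper but not those two levels deeper.\<close>
locale tree_frames = rooted_tree_layout T E r dep lo hi
  for T :: "'b set" and E r dep lo hi +
  fixes x0 y0 \<epsilon> :: real
  assumes \<epsilon>_pos: "0 < \<epsilon>"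
begin

definition "max_depth = Max (dep ` T)"
definition "\<eta> = \<epsilon> / (real max_depth + 4)"
definition "x_lo t = x0 - \<eta> * (real max_depth + 2 - real (dep t))"
definition "x_hi t = (if is_leaf T E t then x0 + \<eta> * (real (dep t) + 1) else x_lo t + 3/2 * \<eta>)"
definition "y_lo t = y0 - \<epsilon> + \<epsilon> * lo t"
definition "y_hi t = y0 - \<epsilon> + \<epsilon> * hi t"
definition "tree_frame t = (x_lo t, x_hi t, y_lo t, y_hi t)"

lemma dep_le_max_depth: "t \<in> T \<Longrightarrow> dep t \<le> max_depth"
  unfolding max_depth_def using finite_T by simp

lemma \<eta>_pos: "0 < \<eta>"
  unfolding \<eta>_def using \<epsilon>_pos by simp

lemma \<eta>_times: "\<eta> * (real max_depth + 4) = \<epsilon>"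
  unfolding \<eta>_def by simp

lemma x_lo_le:
  assumes "t \<in> T"
  shows "x_lo t \<le> x0 - 2 * \<eta>"
proof -
  have "\<eta> * 2 \<le> \<eta> * (real max_depth + 2 - real (dep t))"
    using \<eta>_pos dep_le_max_depth[OF assms] by (intro mult_left_mono) auto
  then show ?thesis unfolding x_lo_def by simp
qed

lemma x_lo_gt: "x0 - \<epsilon> < x_lo t"
proof -
  have "\<eta> * (real max_depth + 2 - real (dep t)) < \<eta> * (real max_depth + 4)"
    using \<eta>_pos by simp
  then show ?thesis unfolding x_lo_def using \<eta>_times by simp
qed

lemma x_lo_child: "dep t' = Suc (dep t) \<Longrightarrow> x_lo t' = x_lo t + \<eta>"
  unfolding x_lo_def by (simp add: algebra_simps)

lemma x_lo_two_levels: "dep t + 2 \<le> dep t' \<Longrightarrow> x_lo t + 2 * \<eta> \<le> x_lo t'"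
proof -
  assume "dep t + 2 \<le> dep t'"
  then have "\<eta> * (real (dep t) + 2) \<le> \<eta> * real (dep t')" using \<eta>_pos by simp
  then show ?thesis unfolding x_lo_def by (simp add: algebra_simps)
qed

lemma x_hi_leaf:
  assumes "is_leaf T E t" "t \<in> T"
  shows "x0 < x_hi t \<and> x_hi t < x0 + \<epsilon>"
proof -
  have "real (dep t) + 1 < real max_depth + 4" using dep_le_max_depth[OF assms(2)] by simp
  then have "\<eta> * (real (dep t) + 1) < \<epsilon>" using \<eta>_pos \<eta>_times by (metis mult_strict_left_mono)
  moreover have "0 < \<eta> * (real (dep t) + 1)" using \<eta>_pos by simp
  ultimately show ?thesis using assms(1) unfolding x_hi_def by simp
qed

lemma x_hi_inner: "\<not> is_leaf T E t \<Longrightarrow> x_hi t = x_lo t + 3/2 * \<eta>"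
  unfolding x_hi_def by simp

lemma x_hi_inner_le: "\<not> is_leaf T E t \<Longrightarrow> t \<in> T \<Longrightarrow> x_hi t \<le> x0 - \<eta> / 2"
  using x_hi_inner x_lo_le by force

lemma y_bounds: "t \<in> T \<Longrightarrow> y0 - \<epsilon> < y_lo t \<and> y_lo t < y_hi t \<and> y_hi t < y0"
  using interval_bounds[of t] \<epsilon>_pos unfolding y_lo_def y_hi_def by simp

lemma y_lo_less: "lo s < lo t \<Longrightarrow> y_lo s < y_lo t"
  unfolding y_lo_def using \<epsilon>_pos by simp

lemma y_hi_less: "hi s < hi t \<Longrightarrow> y_hi s < y_hi t"
  unfolding y_hi_def using \<epsilon>_pos by simp

lemma y_hi_less_y_lo: "hi s < lo t \<Longrightarrow> y_hi s < y_lo t"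
  unfolding y_lo_def y_hi_def using \<epsilon>_pos by simp

lemma x_lo_less_x_hi: "t \<in> T \<Longrightarrow> x_lo t < x_hi t"
  using x_lo_le[of t] x_hi_leaf[of t] x_hi_inner[of t] \<eta>_pos by (cases "is_leaf T E t") auto

lemma valid_tree_frame: "t \<in> T \<Longrightarrow> valid_frame (tree_frame t)"
  unfolding valid_frame_def tree_frame_def using x_lo_less_x_hi y_bounds by simp

lemma lower_corners_in_tree_frame:
  "t \<in> T \<Longrightarrow> (x_lo t, y_lo t) \<in> frame_pts (tree_frame t)"
  "t \<in> T \<Longrightarrow> (x_hi t, y_lo t) \<in> frame_pts (tree_frame t)"
  unfolding tree_frame_def using x_lo_less_x_hi y_bounds by (simp_all add: frame_mem_simps less_imp_le)

lemma tree_frame_region_near: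
  assumes t: "t \<in> T" and xy: "(x, y) \<in> region (tree_frame t)"
  shows "\<bar>x - x0\<bar> \<le> \<epsilon>" "\<bar>y - y0\<bar> \<le> \<epsilon>"
proof -
  have "x_hi t < x0 + \<epsilon>"
    using x_hi_leaf[OF _ t] x_hi_inner_le[OF _ t] \<eta>_pos \<epsilon>_pos by (cases "is_leaf T E t") force+
  then show "\<bar>x - x0\<bar> \<le> \<epsilon>" "\<bar>y - y0\<bar> \<le> \<epsilon>"
    using xy x_lo_gt[of t] y_bounds[OF t] unfolding tree_frame_def by (simp_all add: frame_mem_simps abs_le_iff)
qed

lemma tree_frames_cross_child:
  assumes st: "s \<in> T" "t \<in> T" "E s t" "dep t = Suc (dep s)"
  shows "crosses (tree_frame s) (tree_frame t)"
proof -
  have x_lo_t: "x_lo t = x_lo s + \<eta>" using x_lo_child[OF st(4)] .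
  have "y_lo s < y_lo t" "y_hi t < y_hi s"
    using child_interval_nested[OF st] y_lo_less y_hi_less unfolding interval_encloses_def by auto
  moreover have "x_lo t < x_hi s"
    using x_hi_leaf[OF _ st(1)] x_lo_le[OF st(2)] x_hi_inner[of s] x_lo_t \<eta>_pos
    by (cases "is_leaf T E s") auto
  moreover have "x_hi s < x_hi t"
  proof (cases "is_leaf T E s")
    case True
    then have "is_leaf T E t"
      using leaf_with_child(2)[OF st(1) True st(2-4)] leaf_if_degrees_le_one adj_sym st by blast
    then show ?thesis using True st(4) \<eta>_pos unfolding x_hi_def by simp
  next
    case False
    then show ?thesis
      using x_hi_inner_le[OF False st(1)] x_hi_leaf[OF _ st(2)] x_hi_inner[of t] x_hi_inner[of s]
        x_lo_t \<eta>_pos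
      by (cases "is_leaf T E t") auto
  qed
  ultimately show ?thesis
    using x_lo_t \<eta>_pos y_bounds[OF st(2)] unfolding crosses_def tree_frame_def by simp
qed

lemma tree_frames_separated:
  assumes st: "s \<in> T" "t \<in> T" "s \<noteq> t" "\<not> E s t"
  shows "separated (tree_frame s) (tree_frame t)"
proof -
  have "\<not> E t s" using adj_sym st by blast
  have "y_hi s < y_lo t \<or> y_hi t < y_lo s \<or> x_hi s < x_lo t \<or> x_hi t < x_lo s"
    if "deeper T E dep s t \<or> deeper T E dep t s"
  proof -
    have "x_hi s < x_lo t" if "deeper T E dep s t"
      using deeper_nonadjacent[OF st(1,2) that st(4)] x_hi_inner x_lo_two_levels \<eta>_pos by force
    moreover have "x_hi t < x_lo s" if "deeper T E dep t s"
      using deeper_nonadjacent[OF st(2,1) that \<open>\<not> E t s\<close>] x_hi_inner x_lo_two_levels \<eta>_pos by force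
    ultimately show ?thesis using that by blast
  qed
  then have "y_hi s < y_lo t \<or> y_hi t < y_lo s \<or> x_hi s < x_lo t \<or> x_hi t < x_lo s"
    using compatible[OF st(1-3)] y_hi_less_y_lo by blast
  then show ?thesis unfolding tree_frame_def using valid_tree_frame st(1,2)
    by (intro separatedI) (auto simp: tree_frame_def)
qed

lemma tree_frame_escapes_child_overlap:
  assumes st: "s \<in> T" "t \<in> T" "E s t" "dep t = Suc (dep s)" and z: "z \<in> T"
  shows "\<not> frame_pts (tree_frame z) \<subseteq> region (tree_frame s) \<inter> region (tree_frame t)"
proof -
  have h: "x_lo s < x_lo t" "x_hi s < x_hi t" "y_lo s < y_lo t" "y_hi t < y_hi s"
    using tree_frames_cross_child[OF st] unfolding crosses_def tree_frame_def by simp_all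
  consider "z = t" | "z = s" | "z \<noteq> t" "z \<noteq> s" by blast
  then show ?thesis
  proof cases
    case 1
    have "(x_hi t, y_lo t) \<notin> region (tree_frame s)" using h unfolding tree_frame_def by (simp add: frame_mem_simps)
    then show ?thesis using lower_corners_in_tree_frame(2)[OF st(2)] 1 by blast
  next
    case 2
    have "(x_lo s, y_lo s) \<notin> region (tree_frame t)" using h unfolding tree_frame_def by (simp add: frame_mem_simps)
    then show ?thesis using lower_corners_in_tree_frame(1)[OF st(1)] 2 by blast
  next
    case 3
    have "y_lo z < y_lo t \<or> y_hi t < y_lo z \<or> x_hi s < x_lo z"
    proof -
      have "x_hi s < x_lo z" if "interval_encloses lo hi t z" "deeper T E dep t z"
      proof -
        have gap: "dep s + 2 \<le> dep z" using that(2) st(4) unfolding deeper_def by auto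
        have "\<not> is_leaf T E s"
          using leaf_with_child(2)[OF st(1) _ st(2-4)] dep_le_1_if_degrees_le_one[OF _ z] gap by fastforce
        then show ?thesis using x_hi_inner x_lo_two_levels[OF gap] \<eta>_pos by simp
      qed
      then show ?thesis using compatible[OF z st(2) 3(1)] y_hi_less_y_lo y_lo_less y_bounds[OF z]
        unfolding interval_encloses_def by fastforce
    qed
    then have "(x_lo z, y_lo z) \<notin> region (tree_frame s) \<inter> region (tree_frame t)"
      unfolding tree_frame_def by (auto simp: frame_mem_simps)
    then show ?thesis using lower_corners_in_tree_frame(1)[OF z] by blast
  qed
qed

lemma tree_frame_escapes_leaf_overlap:
  assumes t: "t \<in> T" "is_leaf T E t" and z: "z \<in> T"
  shows "\<not> frame_pts (tree_frame z) \<subseteq> region (a, x0, c, y0) \<inter> region (tree_frame t)"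
proof (cases "is_leaf T E z")
  case True
  have "(x_hi z, y_lo z) \<notin> region (a, x0, c, y0)" using x_hi_leaf[OF True z] by (simp add: frame_mem_simps)
  then show ?thesis using lower_corners_in_tree_frame(2)[OF z] by blast
next
  case z_inner: False
  then have "z \<noteq> t" using t(2) by blast
  have "\<not> (interval_encloses lo hi t z \<and> deeper T E dep t z)"
  proof
    assume "interval_encloses lo hi t z \<and> deeper T E dep t z"
    then have deeper: "deeper T E dep t z" by blast
    show False
    proof (cases "E t z")
      case True
      then have "dep z = Suc (dep t)" using deeper unfolding deeper_def by blast
      then have "is_leaf T E z"
        using leaf_with_child(2)[OF t z True] leaf_if_degrees_le_one adj_sym t(1) z True by blast
      then show False using z_inner by blast
    next
      case False
      then show False using deeper_nonadjacent(1)[OF t(1) z deeper] t(2) by blast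
    qed
  qed
  then have "y_lo z < y_lo t \<or> y_hi t < y_lo z"
    using compatible[OF z t(1) \<open>z \<noteq> t\<close>] y_hi_less_y_lo y_lo_less y_bounds[OF z]
    unfolding interval_encloses_def by fastforce
  then have "(x_lo z, y_lo z) \<notin> region (tree_frame t)" unfolding tree_frame_def by (auto simp: frame_mem_simps)
  then show ?thesis using lower_corners_in_tree_frame(1)[OF z] by blast
qed

lemma box_crosses_leaf_frame:
  assumes "t \<in> T" "is_leaf T E t" "a \<le> x0 - \<epsilon>" "c \<le> y0 - \<epsilon>"
  shows "crosses (a, x0, c, y0) (tree_frame t)"
  using assms x_lo_gt[of t] x_lo_le[of t] x_hi_leaf[of t] y_bounds[of t] \<eta>_pos
  unfolding crosses_def tree_frame_def by fastforce

lemma box_encloses_inner_frame: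
  assumes "t \<in> T" "\<not> is_leaf T E t" "a \<le> x0 - \<epsilon>" "c \<le> y0 - \<epsilon>"
  shows "encloses (a, x0, c, y0) (tree_frame t)"
  using assms x_lo_gt[of t] x_lo_less_x_hi[of t] x_hi_inner_le[of t] y_bounds[of t] \<eta>_pos
  unfolding encloses_def tree_frame_def by fastforce

end

section \<open>The neighbourhood of a corner\<close>

lemma snap_to_coordinate:
  fixes \<alpha> \<beta> e x :: real
  assumes "\<alpha> = \<beta> \<or> 2 * e \<le> \<bar>\<alpha> - \<beta>\<bar>" "0 < e" "\<bar>x - \<beta>\<bar> \<le> e"
  shows "(\<alpha> \<le> x \<longrightarrow> \<alpha> \<le> \<beta>) \<and> (x \<le> \<alpha> \<longrightarrow> \<beta> \<le> \<alpha>) \<and> (x = \<alpha> \<longrightarrow> \<beta> = \<alpha>)"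
  using assms by (auto simp: abs_le_iff abs_if split: if_splits)

text \<open>Every coordinate of every frame
  is either equal to the corresponding coordinate of the corner or at distance at least \<open>2 \<epsilon>\<close>
  from it, so within distance \<open>\<epsilon>\<close> of the corner the frames look as they do at the corner itself.\<close>
locale corner_frame =
  fixes V :: "'a set" and E :: "'a \<Rightarrow> 'a \<Rightarrow> bool" and F :: "'a \<Rightarrow> frame" and v :: 'a
  assumes rep: "restricted_frame_rep V E F" and v: "v \<in> V" and finite_V: "finite V"
begin

definition "av = fst (F v)"
definition "bv = fst (snd (F v))"
definition "cv = fst (snd (snd (F v)))"
definition "dv = snd (snd (snd (F v)))"

definition "x_coords = (\<lambda>w. fst (F w)) ` V \<union> (\<lambda>w. fst (snd (F w))) ` V"
definition "y_coords = (\<lambda>w. fst (snd (snd (F w)))) ` V \<union> (\<lambda>w. snd (snd (snd (F w)))) ` V"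
definition "corner_gaps = ((\<lambda>x. \<bar>x - bv\<bar>) ` x_coords \<union> (\<lambda>y. \<bar>y - dv\<bar>) ` y_coords) - {0}"
definition "\<epsilon> = Min corner_gaps / 2"

lemma F_v: "F v = (av, bv, cv, dv)"
  by (simp add: av_def bv_def cv_def dv_def)

lemma valid_F: "u \<in> V \<Longrightarrow> valid_frame (F u)"
  using restricted_frame_rep_valid[OF rep] .

lemma av_less_bv: "av < bv" and cv_less_dv: "cv < dv"
  using valid_F[OF v] unfolding F_v valid_frame_def by auto

lemma frame_coords:
  assumes "w \<in> V" "F w = (a, b, c, d)"
  shows "a \<in> x_coords" "b \<in> x_coords" "c \<in> y_coords" "d \<in> y_coords"
  unfolding x_coords_def y_coords_def using assms by (auto intro!: image_eqI[where x=w])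

lemma \<epsilon>_pos: "0 < \<epsilon>"
proof -
  have "\<bar>av - bv\<bar> \<in> (\<lambda>x. \<bar>x - bv\<bar>) ` x_coords" using frame_coords(1)[OF v F_v] by (rule imageI)
  moreover have "\<bar>av - bv\<bar> \<noteq> 0" using av_less_bv by simp
  ultimately have "\<bar>av - bv\<bar> \<in> corner_gaps" unfolding corner_gaps_def by blast
  moreover have "finite corner_gaps" unfolding corner_gaps_def x_coords_def y_coords_def
    using finite_V by simp
  moreover have "\<forall>g\<in>corner_gaps. 0 < g" unfolding corner_gaps_def by auto
  ultimately have "0 < Min corner_gaps" using Min_gr_iff[of corner_gaps 0] by blast
  then show ?thesis unfolding \<epsilon>_def by simp
qed

lemma snap_x: "a \<in> x_coords \<Longrightarrow> a = bv \<or> 2 * \<epsilon> \<le> \<bar>a - bv\<bar>"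
  and snap_y: "c \<in> y_coords \<Longrightarrow> c = dv \<or> 2 * \<epsilon> \<le> \<bar>c - dv\<bar>"
proof -
  have fin: "finite corner_gaps" unfolding corner_gaps_def x_coords_def y_coords_def
    using finite_V by simp
  show "a \<in> x_coords \<Longrightarrow> a = bv \<or> 2 * \<epsilon> \<le> \<bar>a - bv\<bar>"
    using Min_le[OF fin, of "\<bar>a - bv\<bar>"] unfolding \<epsilon>_def corner_gaps_def by auto
  show "c \<in> y_coords \<Longrightarrow> c = dv \<or> 2 * \<epsilon> \<le> \<bar>c - dv\<bar>"
    using Min_le[OF fin, of "\<bar>c - dv\<bar>"] unfolding \<epsilon>_def corner_gaps_def by auto
qed

lemma av_le: "av \<le> bv - \<epsilon>" and cv_le: "cv \<le> dv - \<epsilon>"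
  using snap_x[OF frame_coords(1)[OF v F_v]] snap_y[OF frame_coords(3)[OF v F_v]]
    av_less_bv cv_less_dv \<epsilon>_pos
  by auto

lemma snap_near_corner:
  assumes w: "w \<in> V" "F w = (a, b, c, d)" and x: "\<bar>x - bv\<bar> \<le> \<epsilon>" and y: "\<bar>y - dv\<bar> \<le> \<epsilon>"
  shows "(a \<le> x \<longrightarrow> a \<le> bv) \<and> (x \<le> a \<longrightarrow> bv \<le> a) \<and> (x = a \<longrightarrow> bv = a)"
    "(b \<le> x \<longrightarrow> b \<le> bv) \<and> (x \<le> b \<longrightarrow> bv \<le> b) \<and> (x = b \<longrightarrow> bv = b)"
    "(c \<le> y \<longrightarrow> c \<le> dv) \<and> (y \<le> c \<longrightarrow> dv \<le> c) \<and> (y = c \<longrightarrow> dv = c)"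
    "(d \<le> y \<longrightarrow> d \<le> dv) \<and> (y \<le> d \<longrightarrow> dv \<le> d) \<and> (y = d \<longrightarrow> dv = d)"
  using snap_to_coordinate[OF snap_x[OF frame_coords(1)[OF w]] \<epsilon>_pos x]
    snap_to_coordinate[OF snap_x[OF frame_coords(2)[OF w]] \<epsilon>_pos x]
    snap_to_coordinate[OF snap_y[OF frame_coords(3)[OF w]] \<epsilon>_pos y]
    snap_to_coordinate[OF snap_y[OF frame_coords(4)[OF w]] \<epsilon>_pos y]
  by blast+

lemma frame_pts_near_corner:
  assumes w: "w \<in> V" and x: "\<bar>x - bv\<bar> \<le> \<epsilon>" and y: "\<bar>y - dv\<bar> \<le> \<epsilon>"
    and xy: "(x, y) \<in> frame_pts (F w)"
  shows "(bv, dv) \<in> frame_pts (F w)"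
proof -
  obtain a b c d where Fw: "F w = (a, b, c, d)" by (cases "F w") auto
  show ?thesis using xy snap_near_corner[OF w Fw x y] unfolding Fw mem_frame_pts by metis
qed

lemma region_near_corner:
  assumes w: "w \<in> V" and x: "\<bar>x - bv\<bar> \<le> \<epsilon>" and y: "\<bar>y - dv\<bar> \<le> \<epsilon>"
    and xy: "(x, y) \<in> region (F w)"
  shows "(bv, dv) \<in> region (F w)"
proof -
  obtain a b c d where Fw: "F w = (a, b, c, d)" by (cases "F w") auto
  show ?thesis using xy snap_near_corner[OF w Fw x y] unfolding Fw mem_region by blast
qed

lemma corner_not_in_other_frame:
  assumes "w \<in> V" "w \<noteq> v"
  shows "(bv, dv) \<notin> frame_pts (F w)"
proof -
  have "(bv, dv) \<in> corners (F v)" unfolding F_v by (simp add: frame_mem_simps)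
  then show ?thesis using restricted_frame_rep_corners[OF rep v assms(1)] assms(2) by blast
qed

lemma near_corner_not_in_other_frame:
  "w \<in> V \<Longrightarrow> w \<noteq> v \<Longrightarrow> \<bar>x - bv\<bar> \<le> \<epsilon> \<Longrightarrow> \<bar>y - dv\<bar> \<le> \<epsilon> \<Longrightarrow> (x, y) \<notin> frame_pts (F w)"
  using frame_pts_near_corner corner_not_in_other_frame by blast


lemma corner_not_in_neighbour_region:
  assumes w: "w \<in> V" "w \<noteq> v" and meet: "frame_pts (F v) \<inter> frame_pts (F w) \<noteq> {}"
  shows "(bv, dv) \<notin> region (F w)"
proof
  assume corner: "(bv, dv) \<in> region (F w)"
  obtain a b c d where Fw: "F w = (a, b, c, d)" by (cases "F w") auto
  have h: "a \<le> bv" "bv \<le> b" "c \<le> dv" "dv \<le> d" using corner unfolding Fw by (simp_all add: frame_mem_simps)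
  have "(bv, dv) \<notin> frame_pts (a, b, c, d)" using corner_not_in_other_frame[OF w] Fw by simp
  then have "d \<noteq> dv" "b \<noteq> bv" using h by (auto simp: frame_mem_simps)
  from restricted_frame_rep_meet_right_side[OF rep v w(1) w(2)[symmetric] meet] show False
  proof
    assume "right_side (F v) \<inter> frame_pts (F w) \<noteq> {}"
    then have "right_side (F v) \<inter> top_side (F w) \<noteq> {}"
      using restricted_frame_rep_right_side[OF rep v w(1)] w(2) by blast
    then have "d \<le> dv" unfolding F_v Fw by (auto simp: frame_mem_simps)
    then show False using h \<open>d \<noteq> dv\<close> by simp
  next
    assume "right_side (F w) \<inter> frame_pts (F v) \<noteq> {}"
    then have "right_side (F w) \<inter> top_side (F v) \<noteq> {}"
      using restricted_frame_rep_right_side[OF rep w(1) v] w(2) by blast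
    then have "b \<le> bv" unfolding F_v Fw by (auto simp: frame_mem_simps)
    then show False using h \<open>b \<noteq> bv\<close> by simp
  qed
qed

lemma region_containing_corner:
  assumes u: "u \<in> V" "u \<noteq> v" and corner: "(bv, dv) \<in> region (F u)"
  shows "region (F v) \<subseteq> region (F u)"
proof -
  obtain a b c d where Fu: "F u = (a, b, c, d)" by (cases "F u") auto
  have h: "a \<le> bv" "bv \<le> b" "c \<le> dv" "dv \<le> d" using corner unfolding Fu by (simp_all add: frame_mem_simps)
  have "a \<le> av"
  proof (rule ccontr)
    assume "\<not> a \<le> av"
    then have "(a, dv) \<in> left_side (F u) \<inter> frame_pts (F v)"
      using h unfolding F_v Fu by (simp add: frame_mem_simps)
    then show False using restricted_frame_rep_left_side[OF rep u(1) v] u(2) by blast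
  qed
  moreover have "c \<le> cv"
  proof (rule ccontr)
    assume "\<not> c \<le> cv"
    then have "(bv, c) \<in> right_side (F v) \<inter> frame_pts (F u)"
      using h unfolding F_v Fu by (simp add: frame_mem_simps)
    then have "right_side (F v) \<inter> top_side (F u) \<noteq> {}"
      using restricted_frame_rep_right_side[OF rep v u(1)] u(2) by blast
    then have "d \<le> dv" unfolding F_v Fu by (auto simp: frame_mem_simps)
    then have "(bv, dv) \<in> frame_pts (F u)" using h unfolding Fu by (simp add: frame_mem_simps)
    then show False using corner_not_in_other_frame[OF u] by blast
  qed
  ultimately show ?thesis using h unfolding F_v Fu by (auto simp: frame_mem_simps)
qed

lemma corner_not_in_overlap:
  assumes uw: "u \<in> V" "w \<in> V" "u \<noteq> w" and meet: "frame_pts (F u) \<inter> frame_pts (F w) \<noteq> {}"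
  shows "(bv, dv) \<notin> region (F u) \<inter> region (F w)"
proof (cases "u = v \<or> w = v")
  case True
  then show ?thesis
    using corner_not_in_neighbour_region[of w] corner_not_in_neighbour_region[of u] uw meet
    by (auto simp: Int_commute)
next
  case False
  show ?thesis
  proof
    assume "(bv, dv) \<in> region (F u) \<inter> region (F w)"
    then have "frame_pts (F v) \<subseteq> region (F u) \<inter> region (F w)"
      using region_containing_corner[of u] region_containing_corner[of w] False uw
        frame_pts_subset_region[OF valid_F[OF v]] by blast
    then show False using restricted_frame_rep_overlap[OF rep uw(1,2) v uw(3) meet] by blast
  qed
qed

lemma near_corner_not_in_overlap:
  assumes uw: "u \<in> V" "w \<in> V" "u \<noteq> w" and meet: "frame_pts (F u) \<inter> frame_pts (F w) \<noteq> {}"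
    and near: "\<bar>x - bv\<bar> \<le> \<epsilon>" "\<bar>y - dv\<bar> \<le> \<epsilon>"
  shows "(x, y) \<notin> region (F u) \<inter> region (F w)"
  using region_near_corner[OF uw(1) near] region_near_corner[OF uw(2) near] corner_not_in_overlap[OF uw meet]
  by blast

end

section \<open>Gluing\<close>

lemma sum_pair_cases:
  assumes "x \<in> Inl ` A \<union> Inr ` B" "y \<in> Inl ` A \<union> Inr ` B"
  obtains (Inl_Inl) a a' where "x = Inl a" "y = Inl a'" "a \<in> A" "a' \<in> A"
    | (Inl_Inr) a b where "x = Inl a" "y = Inr b" "a \<in> A" "b \<in> B"
    | (Inr_Inl) b a where "x = Inr b" "y = Inl a" "a \<in> A" "b \<in> B"
    | (Inr_Inr) b b' where "x = Inr b" "y = Inr b'" "b \<in> B" "b' \<in> B"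
  using assms by blast

locale glued = corner_frame V1 E1 F1 v + rooted_tree_layout T E2 r dep lo hi
  for V1 :: "'a set" and E1 F1 v and T :: "'b set" and E2 r dep lo hi +
  fixes p :: 'b
  assumes pivot_adj: "t \<in> T \<Longrightarrow> E2 p t \<longleftrightarrow> is_leaf T E2 t"
    and pivot_adj_sym: "t \<in> T \<Longrightarrow> E2 t p \<longleftrightarrow> E2 p t"
begin

sublocale N: tree_frames T E2 r dep lo hi bv dv \<epsilon>
  by unfold_locales (rule \<epsilon>_pos)

definition glued_frame :: "'a + 'b \<Rightarrow> frame" where
  "glued_frame = case_sum F1 N.tree_frame"

lemma glued_frame_simps [simp]:
  "glued_frame (Inl a) = F1 a" "glued_frame (Inr t) = N.tree_frame t"
  by (simp_all add: glued_frame_def)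

lemma glue_E_Inl_Inr: "t \<in> T \<Longrightarrow> glue_E E1 E2 v p (Inl a) (Inr t) \<longleftrightarrow> a = v \<and> is_leaf T E2 t"
  and glue_E_Inr_Inl: "t \<in> T \<Longrightarrow> glue_E E1 E2 v p (Inr t) (Inl a) \<longleftrightarrow> a = v \<and> is_leaf T E2 t"
  using pivot_adj pivot_adj_sym by simp_all

lemma base_frame_avoids_tree_region:
  assumes a: "a \<in> V1" "a \<noteq> v" and t: "t \<in> T"
  shows "frame_pts (F1 a) \<inter> region (N.tree_frame t) = {}"
  using near_corner_not_in_other_frame[OF a] N.tree_frame_region_near[OF t] by fast

lemma base_frame_escapes_tree_region:
  assumes c: "c \<in> V1" and t: "t \<in> T"
  shows "\<not> frame_pts (F1 c) \<subseteq> region (N.tree_frame t)"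
proof (cases "c = v")
  case True
  have "(av, cv) \<in> frame_pts (F1 v)" unfolding F_v using av_less_bv cv_less_dv by (simp add: frame_mem_simps)
  moreover have "(av, cv) \<notin> region (N.tree_frame t)"
    using N.x_lo_gt[of t] av_le unfolding N.tree_frame_def by (simp add: frame_mem_simps)
  ultimately show ?thesis using True by blast
next
  case False
  obtain a b c' d where Fc: "F1 c = (a, b, c', d)" by (cases "F1 c") auto
  then have "(a, c') \<in> frame_pts (F1 c)" using lower_left_corner_in_frame_pts valid_F[OF c] by simp
  then show ?thesis using base_frame_avoids_tree_region[OF c False t] by blast
qed

lemma tree_frame_escapes_base_overlap:
  assumes t: "t \<in> T" and uw: "u \<in> V1" "w \<in> V1" "u \<noteq> w"
    and meet: "frame_pts (F1 u) \<inter> frame_pts (F1 w) \<noteq> {}"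
  shows "\<not> frame_pts (N.tree_frame t) \<subseteq> region (F1 u) \<inter> region (F1 w)"
proof -
  have "(N.x_lo t, N.y_lo t) \<in> frame_pts (N.tree_frame t)" by (rule N.lower_corners_in_tree_frame(1)[OF t])
  moreover have "\<bar>N.x_lo t - bv\<bar> \<le> \<epsilon>" "\<bar>N.y_lo t - dv\<bar> \<le> \<epsilon>"
    using N.tree_frame_region_near[OF t] frame_pts_subset_region[OF N.valid_tree_frame[OF t]] calculation
    by blast+
  ultimately show ?thesis using near_corner_not_in_overlap[OF uw meet] by blast
qed

lemma tree_pair:
  assumes st: "s \<in> T" "t \<in> T" "s \<noteq> t"
  shows "E2 s t \<longleftrightarrow> frame_pts (N.tree_frame s) \<inter> frame_pts (N.tree_frame t) \<noteq> {}"
    and "frames_compatible (N.tree_frame s) (N.tree_frame t)"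
proof -
  have "(E2 s t \<longleftrightarrow> frame_pts (N.tree_frame s) \<inter> frame_pts (N.tree_frame t) \<noteq> {}) \<and>
      frames_compatible (N.tree_frame s) (N.tree_frame t)"
  proof (cases "E2 s t")
    case True
    from adjacent_depths[OF st True] show ?thesis
    proof
      assume "dep t = Suc (dep s)"
      then show ?thesis using crossesD N.tree_frames_cross_child[OF st(1,2) True] True by blast
    next
      assume "dep s = Suc (dep t)"
      then have "crosses (N.tree_frame t) (N.tree_frame s)"
        using N.tree_frames_cross_child[OF st(2,1)] adj_sym[OF st(1,2) True] by blast
      then show ?thesis using crossesD True by (metis Int_commute)
    qed
  next
    case False
    then show ?thesis using separatedD N.tree_frames_separated[OF st False] by blast
  qed
  then show "E2 s t \<longleftrightarrow> frame_pts (N.tree_frame s) \<inter> frame_pts (N.tree_frame t) \<noteq> {}"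
    and "frames_compatible (N.tree_frame s) (N.tree_frame t)" by blast+
qed

lemma base_tree_pair:
  assumes a: "a \<in> V1" and t: "t \<in> T"
  shows "a = v \<and> is_leaf T E2 t \<longleftrightarrow> frame_pts (F1 a) \<inter> frame_pts (N.tree_frame t) \<noteq> {}"
    and "frames_compatible (F1 a) (N.tree_frame t)" "frames_compatible (N.tree_frame t) (F1 a)"
proof -
  have "(a = v \<and> is_leaf T E2 t \<longleftrightarrow> frame_pts (F1 a) \<inter> frame_pts (N.tree_frame t) \<noteq> {}) \<and>
      frames_compatible (F1 a) (N.tree_frame t) \<and> frames_compatible (N.tree_frame t) (F1 a)"
  proof (cases "a = v")
    case True
    show ?thesis
    proof (cases "is_leaf T E2 t")
      case leaf: True
      have "crosses (F1 a) (N.tree_frame t)"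
        unfolding True F_v by (rule N.box_crosses_leaf_frame[OF t leaf av_le cv_le])
      then show ?thesis using crossesD True leaf by blast
    next
      case inner: False
      have "encloses (F1 a) (N.tree_frame t)"
        unfolding True F_v by (rule N.box_encloses_inner_frame[OF t inner av_le cv_le])
      then show ?thesis using enclosesD True inner by blast
    qed
  next
    case False
    have disj: "frame_pts (F1 a) \<inter> frame_pts (N.tree_frame t) = {}"
      using base_frame_avoids_tree_region[OF a False t] frame_pts_subset_region[OF N.valid_tree_frame[OF t]]
      by blast
    then show ?thesis
      using False frames_compatible_if_disjoint valid_F[OF a] N.valid_tree_frame[OF t]
      by (simp add: Int_commute)
  qed
  then show "a = v \<and> is_leaf T E2 t \<longleftrightarrow> frame_pts (F1 a) \<inter> frame_pts (N.tree_frame t) \<noteq> {}"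
    and "frames_compatible (F1 a) (N.tree_frame t)" "frames_compatible (N.tree_frame t) (F1 a)"
    by blast+
qed

lemma base_tree_overlap:
  assumes a: "a \<in> V1" and t: "t \<in> T" and meet: "frame_pts (F1 a) \<inter> frame_pts (N.tree_frame t) \<noteq> {}"
    and z: "z \<in> Inl ` V1 \<union> Inr ` T"
  shows "\<not> frame_pts (glued_frame z) \<subseteq> region (F1 a) \<inter> region (N.tree_frame t)"
proof -
  have "a = v" and leaf: "is_leaf T E2 t" using base_tree_pair(1)[OF a t] meet by blast+
  then have "F1 a = (av, bv, cv, dv)" using F_v by simp
  then show ?thesis
    using z base_frame_escapes_tree_region[OF _ t] N.tree_frame_escapes_leaf_overlap[OF t leaf]
    by auto
qed

lemma tree_overlap:
  assumes st: "s \<in> T" "t \<in> T" "s \<noteq> t" and meet: "frame_pts (N.tree_frame s) \<inter> frame_pts (N.tree_frame t) \<noteq> {}"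
    and z: "z \<in> Inl ` V1 \<union> Inr ` T"
  shows "\<not> frame_pts (glued_frame z) \<subseteq> region (N.tree_frame s) \<inter> region (N.tree_frame t)"
proof -
  have adj: "E2 s t" using tree_pair(1)[OF st] meet by blast
  have "\<not> frame_pts (glued_frame z) \<subseteq> region (N.tree_frame s') \<inter> region (N.tree_frame t')"
    if "s' \<in> T" "t' \<in> T" "E2 s' t'" "dep t' = Suc (dep s')" for s' t'
    using z base_frame_escapes_tree_region[OF _ that(1)] N.tree_frame_escapes_child_overlap[OF that]
    by auto
  then show ?thesis
    using adjacent_depths[OF st adj] st adj adj_sym[OF st(1,2) adj] by (metis Int_commute)
qed

lemma glued_adj_iff:
  assumes "x \<in> Inl ` V1 \<union> Inr ` T" "y \<in> Inl ` V1 \<union> Inr ` T" "x \<noteq> y"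
  shows "glue_E E1 E2 v p x y \<longleftrightarrow> frame_pts (glued_frame x) \<inter> frame_pts (glued_frame y) \<noteq> {}"
  using assms(1,2)
proof (cases rule: sum_pair_cases)
  case (Inl_Inl a b)
  then show ?thesis using restricted_frame_rep_adj_iff[OF rep] assms(3) by auto
next
  case (Inl_Inr a t)
  then show ?thesis using base_tree_pair(1) glue_E_Inl_Inr by simp
next
  case (Inr_Inl t a)
  then show ?thesis using base_tree_pair(1) glue_E_Inr_Inl by (simp add: Int_commute)
next
  case (Inr_Inr s t)
  then show ?thesis using tree_pair(1) assms(3) by auto
qed

lemma glued_compatible:
  assumes "x \<in> Inl ` V1 \<union> Inr ` T" "y \<in> Inl ` V1 \<union> Inr ` T" "x \<noteq> y"
  shows "frames_compatible (glued_frame x) (glued_frame y)"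
  using assms(1,2)
proof (cases rule: sum_pair_cases)
  case (Inl_Inl a b)
  then show ?thesis using restricted_frame_rep_compatible[OF rep] assms(3) by auto
next
  case (Inl_Inr a t)
  then show ?thesis using base_tree_pair(2) by simp
next
  case (Inr_Inl t a)
  then show ?thesis using base_tree_pair(3) by simp
next
  case (Inr_Inr s t)
  then show ?thesis using tree_pair(2) assms(3) by auto
qed

lemma glued_overlap:
  assumes "x \<in> Inl ` V1 \<union> Inr ` T" "y \<in> Inl ` V1 \<union> Inr ` T" "z \<in> Inl ` V1 \<union> Inr ` T" "x \<noteq> y"
    and meet: "frame_pts (glued_frame x) \<inter> frame_pts (glued_frame y) \<noteq> {}"
  shows "\<not> frame_pts (glued_frame z) \<subseteq> region (glued_frame x) \<inter> region (glued_frame y)"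
  using assms(1,2)
proof (cases rule: sum_pair_cases)
  case (Inl_Inl a b)
  then have ab: "a \<noteq> b" and meet': "frame_pts (F1 a) \<inter> frame_pts (F1 b) \<noteq> {}"
    using assms(4) meet by auto
  show ?thesis
    using assms(3) Inl_Inl restricted_frame_rep_overlap[OF rep Inl_Inl(3,4) _ ab meet']
      tree_frame_escapes_base_overlap[OF _ Inl_Inl(3,4) ab meet']
    by auto
next
  case (Inl_Inr a t)
  then show ?thesis using base_tree_overlap assms(3) meet by simp
next
  case (Inr_Inl t a)
  then show ?thesis using base_tree_overlap[of a t z] assms(3) meet by (simp add: Int_commute)
next
  case (Inr_Inr s t)
  then show ?thesis using tree_overlap[of s t z] assms(3,4) meet by auto
qed

lemma glued_rep: "restricted_frame_rep (Inl ` V1 \<union> Inr ` T) (glue_E E1 E2 v p) glued_frame"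
  using valid_F N.valid_tree_frame glued_adj_iff glued_compatible glued_overlap
  by (intro restricted_frame_repI) auto

end

lemma tree_admissible_root:
  assumes "is_tree T E"
  obtains r where "r \<in> T" "is_leaf T E r \<Longrightarrow> \<forall>t\<in>T. degree T E t \<le> 1"
proof (cases "\<exists>t\<in>T. 2 \<le> degree T E t")
  case True
  then obtain t where "t \<in> T" "\<not> is_leaf T E t" unfolding is_leaf_def by force
  then show ?thesis using that by blast
next
  case False
  obtain t where "t \<in> T" using assms unfolding is_tree_def by blast
  then show ?thesis using that False by force
qed

lemma simple_graph_glue:
  assumes sg1: "simple_graph V1 E1" and sg2: "simple_graph V2 E2" and p: "p \<in> V2"
  shows "simple_graph (glue_V V1 V2 p) (glue_E E1 E2 v p)"
proof -
  have sym1: "\<And>x y. x \<in> V1 \<Longrightarrow> y \<in> V1 \<Longrightarrow> E1 x y \<Longrightarrow> E1 y x"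
    and sym2: "\<And>x y. x \<in> V2 \<Longrightarrow> y \<in> V2 \<Longrightarrow> E2 x y \<Longrightarrow> E2 y x"
    using sg1 sg2 by (simp_all add: simple_graph_def)
  have "glue_E E1 E2 v p y x" if "x \<in> glue_V V1 V2 p" "y \<in> glue_V V1 V2 p" "glue_E E1 E2 v p x y" for x y
    using that(1,2) unfolding glue_V_def
  proof (cases rule: sum_pair_cases)
    case (Inl_Inl a a')
    then show ?thesis using that(3) sym1 by simp
  next
    case (Inl_Inr a b)
    then show ?thesis using that(3) sym2[OF p, of b] by simp
  next
    case (Inr_Inl b a)
    then show ?thesis using that(3) sym2[OF _ p, of b] by simp
  next
    case (Inr_Inr b b')
    then show ?thesis using that(3) sym2[of b b'] by simp
  qed
  moreover have "\<not> glue_E E1 E2 v p x x" if "x \<in> glue_V V1 V2 p" for x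
  proof -
    have "\<not> E1 a a" if "a \<in> V1" for a using that sg1 by (simp add: simple_graph_def)
    moreover have "\<not> E2 b b" if "b \<in> V2" for b using that sg2 by (simp add: simple_graph_def)
    ultimately show ?thesis using that unfolding glue_V_def by auto
  qed
  moreover have "finite (glue_V V1 V2 p)" using sg1 sg2 by (simp add: glue_V_def simple_graph_def)
  ultimately show ?thesis unfolding simple_graph_def by blast
qed

theorem lemma4p3:
  fixes V1 :: "'a set" and E1 :: "'a \<Rightarrow> 'a \<Rightarrow> bool"
    and V2 :: "'b set" and E2 :: "'b \<Rightarrow> 'b \<Rightarrow> bool"
    and p :: 'b and v :: 'a
  assumes "restricted_frame_graph V1 E1"
    and "chandelier V2 E2 p"
    and "v \<in> V1"
  shows "restricted_frame_graph (glue_V V1 V2 p) (glue_E E1 E2 v p)"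
proof -
  obtain F1 where rep: "restricted_frame_rep V1 E1 F1" and sg1: "simple_graph V1 E1"
    using assms(1) unfolding restricted_frame_graph_def by blast
  have sg2: "simple_graph V2 E2" and p: "p \<in> V2" and tree: "is_tree (V2 - {p}) E2"
    and pivot: "\<And>t. t \<in> V2 - {p} \<Longrightarrow> E2 p t \<longleftrightarrow> is_leaf (V2 - {p}) E2 t"
    using assms(2) unfolding chandelier_def by blast+
  have pivot_sym: "\<And>t. t \<in> V2 - {p} \<Longrightarrow> E2 t p \<longleftrightarrow> E2 p t"
    and finite_V1: "finite V1"
    using sg1 sg2 p by (auto simp: simple_graph_def)
  obtain r where root: "r \<in> V2 - {p}"
    and leaf_root_degrees_le_one: "is_leaf (V2 - {p}) E2 r \<Longrightarrow> \<forall>t\<in>V2 - {p}. degree (V2 - {p}) E2 t \<le> 1"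
    using tree_admissible_root[OF tree] by blast
  obtain dep lo hi where "tree_layout (V2 - {p}) E2 r dep lo hi"
    using tree_layout_exists[OF tree root] by blast
  then interpret glued V1 E1 F1 v "V2 - {p}" E2 r dep lo hi p
    by unfold_locales (use rep assms(3) finite_V1 tree root leaf_root_degrees_le_one pivot pivot_sym in blast)+
  have "restricted_frame_rep (glue_V V1 V2 p) (glue_E E1 E2 v p) glued_frame"
    using glued_rep by (simp add: glue_V_def)
  then show ?thesis
    using simple_graph_glue[OF sg1 sg2 p] unfolding restricted_frame_graph_def by blast
qed

end
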